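(* Let $\mathbb{F}$ be a finite field. For every $d\in\mathbb{N}$ there exists a CMSO sentence $\mathrm{csd}_d$ over the signature $\Sigma_{\mathbb{F}}$ such that for every matrix $A$ over $\mathbb{F}$ we have $\mathcal{S}(A)\models \mathrm{csd}_d$ if and only if $\mathrm{csd}(M(A))\le d$.
   Context: $\Sigma_{\mathbb{F}}$ consists of unary relation symbols $R,C$ and binary relation symbols $\mathrm{Entry}_\alpha$ for $\alpha\in\mathbb{F}$. For a matrix $A$, the structure $\mathcal{S}(A)$ has universe the (disjoint) union of the set of rows and the set of columns of $A$, interprets $R$ as the set of rows, $C$ as the set of columns, and $\mathrm{Entry}_\alpha$ as $\{(r,c): A(r,c)=\alpha\}$. CMSO is monadic second-order logic (quantification over elements and over sets of elements, with membership $x\in X$) extended with predicates $\mathrm{mod}_{a,b}(X)$ expressing $|X|\equiv a \pmod b$. Contraction$^*$-depth: for $A$ with $m$ rows and a subspace $K\subseteq\mathbb{F}^m$, $M(A,K)$ is the matroid on the columns where a set $\{u_1,\dots,u_\ell\}$ is dependent iff $\sum\alpha_iu_i\in K$ for some $\alpha_i$ not all $0$; $\mathrm{csd}(A,K)=0$ if $M(A,K)$ has rank $0$; otherwise if $M(A,K)$ is disconnected (not every two elements lie in a common circuit), $\mathrm{csd}(A,K)=\max_C\mathrm{csd}(A_C,K)$ over connected components $C$ ($A_C$ the submatrix of columns of $C$); otherwise $\mathrm{csd}(A,K)=1+\min_{v\in\mathbb{F}^m}\mathrm{csd}(A,K+\mathrm{span}(v))$; $\mathrm{csd}(M(A))=\mathrm{csd}(A,\{0\})$.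 *)

theory Defs
  imports "Jordan_Normal_Form.Matrix"
begin

datatype 'f cmso =
    RowP nat
  | ColP nat
  | Entry 'f nat nat
  | Eq nat nat
  | Mem nat nat
  | ModP nat nat nat
  | Neg "'f cmso"
  | Conj "'f cmso" "'f cmso"
  | Ex1 nat "'f cmso"          (* exists element *)
  | Ex2 nat "'f cmso"          (* exists set of elements *)

fun fv1 :: "'f cmso \<Rightarrow> nat set" where
  "fv1 (RowP x) = {x}"
| "fv1 (ColP x) = {x}"
| "fv1 (Entry a x y) = {x, y}"
| "fv1 (Eq x y) = {x, y}"
| "fv1 (Mem x X) = {x}"
| "fv1 (ModP a b X) = {}"
| "fv1 (Neg p) = fv1 p"
| "fv1 (Conj p q) = fv1 p \<union> fv1 q"
| "fv1 (Ex1 x p) = fv1 p - {x}"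
| "fv1 (Ex2 X p) = fv1 p"

fun fv2 :: "'f cmso \<Rightarrow> nat set" where
  "fv2 (RowP x) = {}"
| "fv2 (ColP x) = {}"
| "fv2 (Entry a x y) = {}"
| "fv2 (Eq x y) = {}"
| "fv2 (Mem x X) = {X}"
| "fv2 (ModP a b X) = {X}"
| "fv2 (Neg p) = fv2 p"
| "fv2 (Conj p q) = fv2 p \<union> fv2 q"
| "fv2 (Ex1 x p) = fv2 p"
| "fv2 (Ex2 X p) = fv2 p - {X}"

definition sentence :: "'f cmso \<Rightarrow> bool" where
  "sentence p \<longleftrightarrow> fv1 p = {} \<and> fv2 p = {}"

text \<open>The structure S(A): universe = disjoint union of rows (Inl i) and columns (Inr j).\<close>

definition univ_S :: "'f mat \<Rightarrow> (nat + nat) set" where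
  "univ_S A = Inl ` {..<dim_row A} \<union> Inr ` {..<dim_col A}"

fun sat :: "'f mat \<Rightarrow> (nat \<Rightarrow> nat + nat) \<Rightarrow> (nat \<Rightarrow> (nat + nat) set) \<Rightarrow> 'f cmso \<Rightarrow> bool" where
  "sat A \<sigma> \<tau> (RowP x) \<longleftrightarrow> \<sigma> x \<in> Inl ` {..<dim_row A}"
| "sat A \<sigma> \<tau> (ColP x) \<longleftrightarrow> \<sigma> x \<in> Inr ` {..<dim_col A}"
| "sat A \<sigma> \<tau> (Entry a x y) \<longleftrightarrow>
     (\<exists>i j. \<sigma> x = Inl i \<and> \<sigma> y = Inr j \<and> i < dim_row A \<and> j < dim_col A \<and> A $$ (i, j) = a)"
| "sat A \<sigma> \<tau> (Eq x y) \<longleftrightarrow> \<sigma> x = \<sigma> y"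
| "sat A \<sigma> \<tau> (Mem x X) \<longleftrightarrow> \<sigma> x \<in> \<tau> X"
| "sat A \<sigma> \<tau> (ModP a b X) \<longleftrightarrow> card (\<tau> X) mod b = a mod b"
| "sat A \<sigma> \<tau> (Neg p) \<longleftrightarrow> \<not> sat A \<sigma> \<tau> p"
| "sat A \<sigma> \<tau> (Conj p q) \<longleftrightarrow> sat A \<sigma> \<tau> p \<and> sat A \<sigma> \<tau> q"
| "sat A \<sigma> \<tau> (Ex1 x p) \<longleftrightarrow> (\<exists>e \<in> univ_S A. sat A (\<sigma>(x := e)) \<tau> p)"
| "sat A \<sigma> \<tau> (Ex2 X p) \<longleftrightarrow> (\<exists>E. E \<subseteq> univ_S A \<and> sat A \<sigma> (\<tau>(X := E)) p)"

text \<open>Satisfaction of a sentence (free variables absent, so the initial assignment is irrelevant).\<close>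
definition models :: "'f mat \<Rightarrow> 'f cmso \<Rightarrow> bool" where
  "models A p \<longleftrightarrow> sat A (\<lambda>_. Inl 0) (\<lambda>_. {}) p"

definition is_subspace :: "nat \<Rightarrow> 'f::field vec set \<Rightarrow> bool" where
  "is_subspace m K \<longleftrightarrow> K \<subseteq> carrier_vec m \<and> 0\<^sub>v m \<in> K \<and>
     (\<forall>u\<in>K. \<forall>w\<in>K. u + w \<in> K) \<and> (\<forall>a. \<forall>u\<in>K. a \<cdot>\<^sub>v u \<in> K)"

definition add_span :: "'f::field vec set \<Rightarrow> 'f vec \<Rightarrow> 'f vec set" where
  "add_span K v = {k + a \<cdot>\<^sub>v v | k a. k \<in> K}"

definition lincomb_cols :: "'f::field mat \<Rightarrow> (nat \<Rightarrow> 'f) \<Rightarrow> nat set \<Rightarrow> 'f vec" where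
  "lincomb_cols A \<alpha> T = vec (dim_row A) (\<lambda>i. \<Sum>c\<in>T. \<alpha> c * A $$ (i, c))"

text \<open>Dependent sets of M(A,K) (ground set = column indices).\<close>
definition dependent_M :: "'f::field mat \<Rightarrow> 'f vec set \<Rightarrow> nat set \<Rightarrow> bool" where
  "dependent_M A K T \<longleftrightarrow> T \<subseteq> {..<dim_col A} \<and>
     (\<exists>\<alpha>. (\<exists>c\<in>T. \<alpha> c \<noteq> 0) \<and> lincomb_cols A \<alpha> T \<in> K)"

definition circuit_M :: "'f::field mat \<Rightarrow> 'f vec set \<Rightarrow> nat set \<Rightarrow> nat set \<Rightarrow> bool" where
  "circuit_M A K S C \<longleftrightarrow> C \<subseteq> S \<and> dependent_M A K C \<and> (\<forall>C'. C' \<subset> C \<longrightarrow> \<not> dependent_M A K C')"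

definition rank_M :: "'f::field mat \<Rightarrow> 'f vec set \<Rightarrow> nat set \<Rightarrow> nat" where
  "rank_M A K S = Max {card T | T. T \<subseteq> S \<and> \<not> dependent_M A K T}"

definition connected_M :: "'f::field mat \<Rightarrow> 'f vec set \<Rightarrow> nat set \<Rightarrow> bool" where
  "connected_M A K S \<longleftrightarrow>
     (\<forall>x\<in>S. \<forall>y\<in>S. x \<noteq> y \<longrightarrow> (\<exists>C. circuit_M A K S C \<and> x \<in> C \<and> y \<in> C))"

definition components_M :: "'f::field mat \<Rightarrow> 'f vec set \<Rightarrow> nat set \<Rightarrow> nat set set" where
  "components_M A K S =
     {{y\<in>S. x = y \<or> (\<exists>C. circuit_M A K S C \<and> x \<in> C \<and> y \<in> C)} | x. x \<in> S}"

text \<open>csd_le A K S d  means  csd(A_S, K) <= d  (least fixed point of the recursive definition).\<close>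
inductive csd_le :: "'f::field mat \<Rightarrow> 'f vec set \<Rightarrow> nat set \<Rightarrow> nat \<Rightarrow> bool" for A where
  rank0: "rank_M A K S = 0 \<Longrightarrow> csd_le A K S d"
| disconn: "rank_M A K S \<noteq> 0 \<Longrightarrow> \<not> connected_M A K S \<Longrightarrow>
     (\<And>C. C \<in> components_M A K S \<Longrightarrow> csd_le A K C d) \<Longrightarrow> csd_le A K S d"
| conn: "rank_M A K S \<noteq> 0 \<Longrightarrow> connected_M A K S \<Longrightarrow> v \<in> carrier_vec (dim_row A) \<Longrightarrow>
     csd_le A (add_span K v) S d \<Longrightarrow> csd_le A K S (Suc d)"

definition csd :: "'f::field mat \<Rightarrow> 'f vec set \<Rightarrow> nat set \<Rightarrow> nat" where
  "csd A K S = (LEAST d. csd_le A K S d)"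

definition csd_matroid :: "'f::field mat \<Rightarrow> nat" where
  "csd_matroid A = csd A {0\<^sub>v (dim_row A)} {..<dim_col A}"

end

theory Submission
  imports Defs "HOL-Library.Countable_Set"
begin

(* By its recursive definition, csd(M(A,K)) <= d unfolds into at most d rounds of one step: decide
   whether all columns are loops, whether M(A,K) is connected and what its components are, and in
   the connected case guess a vector v and continue with K + span(v). Every notion involved reduces
   to dependence of a set T of columns, i.e. to some non-trivial combination of the columns in T
   lying in K, and K is the span of the at most d guessed vectors. Over a finite field a vector
   indexed by the rows or the columns is a partition of them into |F| sets, so it can be quantified
   in MSO; whether a linear combination lies in K is checked row by row, counting modulo the
   characteristic the columns that carry each pair of coefficient and entry. The recursion may
   treat components as connected because circuit elimination makes "lying on a common circuit"
   transitive. *)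

section \<open>Circuits and connected components of \<open>M(A,K)\<close>\<close>

definition supp :: "(nat \<Rightarrow> 'f::zero) \<Rightarrow> nat set" where
  "supp \<alpha> = {c. \<alpha> c \<noteq> 0}"

definition supported_in :: "(nat \<Rightarrow> 'f::zero) set \<Rightarrow> nat set \<Rightarrow> bool" where
  "supported_in Z T \<longleftrightarrow> (\<exists>\<alpha>\<in>Z. supp \<alpha> \<noteq> {} \<and> supp \<alpha> \<subseteq> T)"

definition min_support :: "(nat \<Rightarrow> 'f::zero) set \<Rightarrow> nat set \<Rightarrow> bool" where
  "min_support Z D \<longleftrightarrow> supported_in Z D \<and> (\<forall>D'. D' \<subset> D \<longrightarrow> \<not> supported_in Z D')"

lemma min_support_not_psubset: "min_support Z C \<Longrightarrow> min_support Z D \<Longrightarrow> \<not> D \<subset> C"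
  unfolding min_support_def by blast

locale coeff_space =
  fixes Z :: "(nat \<Rightarrow> 'f::field) set"
  assumes diff_closed: "\<alpha> \<in> Z \<Longrightarrow> \<beta> \<in> Z \<Longrightarrow> (\<lambda>c. \<alpha> c - t * \<beta> c) \<in> Z"
    and finite_supp: "\<alpha> \<in> Z \<Longrightarrow> finite (supp \<alpha>)"
begin

lemma min_support_is_supp:
  assumes "min_support Z D"
  shows "\<exists>\<alpha>\<in>Z. supp \<alpha> = D"
proof -
  obtain \<alpha> where \<alpha>: "\<alpha> \<in> Z" "supp \<alpha> \<noteq> {}" "supp \<alpha> \<subseteq> D"
    using assms unfolding min_support_def supported_in_def by blast
  then have "\<not> supp \<alpha> \<subset> D"
    using assms unfolding min_support_def supported_in_def by blast
  with \<alpha> show ?thesis by blast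
qed

lemma min_support_finite: "min_support Z D \<Longrightarrow> finite D"
  using min_support_is_supp finite_supp by blast

lemma min_support_within:
  assumes "\<alpha> \<in> Z" "x \<in> supp \<alpha>"
  shows "\<exists>D. min_support Z D \<and> x \<in> D \<and> D \<subseteq> supp \<alpha>"
  using assms
proof (induction "card (supp \<alpha>)" arbitrary: \<alpha> rule: less_induct)
  case less
  show ?case
  proof (cases "min_support Z (supp \<alpha>)")
    case True
    with less.prems show ?thesis by blast
  next
    case False
    then obtain \<pi> where \<pi>: "\<pi> \<in> Z" "supp \<pi> \<noteq> {}" "supp \<pi> \<subset> supp \<alpha>"
      using less.prems unfolding min_support_def supported_in_def by blast
    have fin: "finite (supp \<alpha>)"
      using finite_supp less.prems(1) .
    show ?thesis
    proof (cases "x \<in> supp \<pi>")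
      case True
      with less.hyps[OF psubset_card_mono[OF fin \<pi>(3)] \<pi>(1)] \<pi>(3) show ?thesis
        by blast
    next
      case False
      obtain w where w: "w \<in> supp \<pi>"
        using \<pi>(2) by blast
      define \<gamma> where "\<gamma> = (\<lambda>c. \<alpha> c - (\<alpha> w / \<pi> w) * \<pi> c)"
      have "\<gamma> \<in> Z"
        unfolding \<gamma>_def using diff_closed less.prems(1) \<pi>(1) .
      moreover have "x \<in> supp \<gamma>"
        using False less.prems(2) by (simp add: supp_def \<gamma>_def)
      moreover have sub: "supp \<gamma> \<subseteq> supp \<alpha> - {w}"
        using w \<pi>(3) by (auto simp: supp_def \<gamma>_def)
      then have "card (supp \<gamma>) < card (supp \<alpha>)"
        using w \<pi>(3) fin by (metis card_Diff1_less card_mono finite_Diff le_less_trans psubsetD)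
      ultimately show ?thesis
        using less.hyps sub by blast
    qed
  qed
qed

lemma min_support_elimination:
  assumes "min_support Z C1" "min_support Z C2" "y \<in> C1 \<inter> C2" "x \<in> C1 - C2"
  shows "\<exists>D. min_support Z D \<and> x \<in> D \<and> D \<subseteq> C1 \<union> C2 - {y}"
proof -
  obtain l m where lm: "l \<in> Z" "supp l = C1" "m \<in> Z" "supp m = C2"
    using min_support_is_supp assms(1,2) by metis
  define \<gamma> where "\<gamma> = (\<lambda>c. l c - (l y / m y) * m c)"
  have "\<gamma> \<in> Z"
    unfolding \<gamma>_def using diff_closed lm(1,3) .
  moreover have "x \<in> supp \<gamma>" "supp \<gamma> \<subseteq> C1 \<union> C2 - {y}"
    using lm assms(3,4) by (auto simp: supp_def \<gamma>_def)
  ultimately show ?thesis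
    using min_support_within by blast
qed

lemma min_supports_link:
  assumes "min_support Z C1" "min_support Z C2" "x \<in> C1" "z \<in> C2" "C1 \<inter> C2 \<noteq> {}"
  shows "\<exists>D. min_support Z D \<and> x \<in> D \<and> z \<in> D \<and> D \<subseteq> C1 \<union> C2"
  using assms
proof (induction "card (C1 \<union> C2)" arbitrary: C1 C2 x z rule: less_induct)
  case less
  show ?case
  proof (cases "z \<in> C1 \<or> x \<in> C2")
    case True
    with less.prems show ?thesis by blast
  next
    case False
    obtain y where y: "y \<in> C1" "y \<in> C2"
      using less.prems(5) by blast
    obtain r where r: "min_support Z r" "x \<in> r" "r \<subseteq> C1 \<union> C2 - {y}"
      using min_support_elimination[OF less.prems(1,2)] y False less.prems(3) by blast
    obtain s where s: "min_support Z s" "z \<in> s" "s \<subseteq> C1 \<union> C2 - {y}"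
      using min_support_elimination[OF less.prems(2,1)] y False less.prems(4) by blast
    have fin: "finite (C1 \<union> C2)"
      using min_support_finite less.prems(1,2) by blast
    have smaller: "card (C \<union> D) < card (C1 \<union> C2)" if "C \<union> D \<subset> C1 \<union> C2" for C D
      using psubset_card_mono[OF fin that] .
    show ?thesis
    proof (cases "z \<in> r \<or> x \<in> s")
      case True
      with r s show ?thesis by blast
    next
      case False
      have "\<not> r \<subset> C1" "\<not> s \<subset> C2"
        using min_support_not_psubset r(1) s(1) less.prems(1,2) by blast+
      then obtain w w' where w: "w \<in> r" "w \<in> C2 - C1" and w': "w' \<in> s" "w' \<in> C1 - C2"
        using r(3) s(3) y by blast
      \<comment> \<open>one of the pairs meets, in \<open>w\<close> or \<open>w'\<close>, and has a smaller union\<close>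
      consider "r \<union> C2 \<subset> C1 \<union> C2" | "C1 \<union> s \<subset> C1 \<union> C2" | "r \<union> s \<subset> C1 \<union> C2" "w \<in> s"
        using r(3) s(3) y w(2) by blast
      then show ?thesis
      proof cases
        case 1
        from less.hyps[OF smaller[OF 1] r(1) less.prems(2) r(2) less.prems(4)] w 1 show ?thesis
          by blast
      next
        case 2
        from less.hyps[OF smaller[OF 2] less.prems(1) s(1) less.prems(3) s(2)] w' 2 show ?thesis
          by blast
      next
        case 3
        from less.hyps[OF smaller[OF 3(1)] r(1) s(1) r(2) s(2)] w(1) 3 show ?thesis
          by blast
      qed
    qed
  qed
qed

end

definition relations :: "'f::field mat \<Rightarrow> 'f vec set \<Rightarrow> (nat \<Rightarrow> 'f) set" where
  "relations A K = {\<alpha>. (\<forall>c\<ge>dim_col A. \<alpha> c = 0) \<and> lincomb_cols A \<alpha> {..<dim_col A} \<in> K}"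

lemma lincomb_cols_diff:
  "lincomb_cols A (\<lambda>c. \<alpha> c - t * \<beta> c) T = lincomb_cols A \<alpha> T + (- t) \<cdot>\<^sub>v lincomb_cols A \<beta> T"
  unfolding lincomb_cols_def
  by (rule eq_vecI)
    (simp_all add: left_diff_distrib sum_subtractf sum_distrib_left mult.assoc sum_negf)

lemma lincomb_cols_restrict:
  assumes "T \<subseteq> {..<dim_col A}" "\<And>c. c \<notin> T \<Longrightarrow> \<alpha> c = 0"
  shows "lincomb_cols A \<alpha> {..<dim_col A} = lincomb_cols A \<alpha> T"
  unfolding lincomb_cols_def using assms
  by (intro arg_cong[of _ _ "vec _"] ext sum.mono_neutral_right) auto

lemma coeff_space_relations:
  assumes "is_subspace (dim_row A) K"
  shows "coeff_space (relations A K)"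
proof
  fix \<alpha> \<beta> :: "nat \<Rightarrow> 'a" and t
  assume "\<alpha> \<in> relations A K" "\<beta> \<in> relations A K"
  with assms show "(\<lambda>c. \<alpha> c - t * \<beta> c) \<in> relations A K"
    by (simp add: relations_def lincomb_cols_diff is_subspace_def)
next
  fix \<alpha> :: "nat \<Rightarrow> 'a"
  assume "\<alpha> \<in> relations A K"
  then have "supp \<alpha> \<subseteq> {..<dim_col A}"
    by (auto simp: relations_def supp_def not_less[symmetric])
  then show "finite (supp \<alpha>)"
    using finite_subset by blast
qed

lemma dependent_M_iff_supported_in:
  "dependent_M A K T \<longleftrightarrow> T \<subseteq> {..<dim_col A} \<and> supported_in (relations A K) T"
proof
  assume "dependent_M A K T"
  then obtain \<alpha> c where a: "T \<subseteq> {..<dim_col A}" "c \<in> T" "\<alpha> c \<noteq> 0" "lincomb_cols A \<alpha> T \<in> K"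
    unfolding dependent_M_def by blast
  define \<alpha>' where "\<alpha>' c = (if c \<in> T then \<alpha> c else 0)" for c
  have "lincomb_cols A \<alpha>' {..<dim_col A} = lincomb_cols A \<alpha>' T"
    using a(1) by (intro lincomb_cols_restrict) (auto simp: \<alpha>'_def)
  also have "\<dots> = lincomb_cols A \<alpha> T"
    unfolding lincomb_cols_def \<alpha>'_def by simp
  finally have "\<alpha>' \<in> relations A K"
    using a(1,4) by (auto simp: relations_def \<alpha>'_def)
  moreover have "c \<in> supp \<alpha>'" "supp \<alpha>' \<subseteq> T"
    using a by (auto simp: supp_def \<alpha>'_def)
  ultimately show "T \<subseteq> {..<dim_col A} \<and> supported_in (relations A K) T"
    using a(1) unfolding supported_in_def by blast
next
  assume "T \<subseteq> {..<dim_col A} \<and> supported_in (relations A K) T"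
  then obtain \<alpha> c where a: "T \<subseteq> {..<dim_col A}" "\<alpha> \<in> relations A K" "c \<in> supp \<alpha>" "supp \<alpha> \<subseteq> T"
    unfolding supported_in_def by blast
  have "lincomb_cols A \<alpha> {..<dim_col A} = lincomb_cols A \<alpha> T"
    using a by (intro lincomb_cols_restrict) (auto simp: supp_def)
  with a show "dependent_M A K T"
    unfolding dependent_M_def relations_def supp_def by auto
qed

lemma dependent_M_mono:
  "dependent_M A K T \<Longrightarrow> T \<subseteq> T' \<Longrightarrow> T' \<subseteq> {..<dim_col A} \<Longrightarrow> dependent_M A K T'"
  unfolding dependent_M_iff_supported_in supported_in_def by blast

lemma circuit_M_iff_min_support:
  "S \<subseteq> {..<dim_col A} \<Longrightarrow> circuit_M A K S D \<longleftrightarrow> D \<subseteq> S \<and> min_support (relations A K) D"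
  unfolding circuit_M_def min_support_def dependent_M_iff_supported_in
  by (meson order.trans psubset_imp_subset)

lemma circuit_M_restrict: "C \<subseteq> S \<Longrightarrow> circuit_M A K C D \<longleftrightarrow> D \<subseteq> C \<and> circuit_M A K S D"
  unfolding circuit_M_def by auto

definition linked_M :: "'f::field mat \<Rightarrow> 'f vec set \<Rightarrow> nat set \<Rightarrow> nat \<Rightarrow> nat \<Rightarrow> bool" where
  "linked_M A K S x y \<longleftrightarrow> x = y \<or> (\<exists>C. circuit_M A K S C \<and> x \<in> C \<and> y \<in> C)"

lemma components_M_linked: "components_M A K S = {{y\<in>S. linked_M A K S x y} | x. x \<in> S}"
  unfolding components_M_def linked_M_def ..

lemma linked_M_sym: "linked_M A K S x y \<Longrightarrow> linked_M A K S y x"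
  unfolding linked_M_def by blast

lemma linked_M_trans:
  assumes K: "is_subspace (dim_row A) K" and S: "S \<subseteq> {..<dim_col A}"
    and xy: "linked_M A K S x y" and yz: "linked_M A K S y z"
  shows "linked_M A K S x z"
proof (cases "x = y \<or> y = z")
  case True
  with xy yz show ?thesis by auto
next
  case False
  interpret coeff_space "relations A K"
    using coeff_space_relations[OF K] .
  obtain C1 C2 where C: "circuit_M A K S C1" "circuit_M A K S C2"
    "x \<in> C1" "y \<in> C1" "y \<in> C2" "z \<in> C2"
    using False xy yz unfolding linked_M_def by blast
  then have sub: "C1 \<subseteq> S" "C2 \<subseteq> S"
    and min: "min_support (relations A K) C1" "min_support (relations A K) C2"
    using circuit_M_iff_min_support[OF S] by auto
  obtain D where D: "min_support (relations A K) D" "x \<in> D" "z \<in> D" "D \<subseteq> C1 \<union> C2"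
    using min_supports_link[OF min C(3,6)] C(4,5) by blast
  then have "circuit_M A K S D"
    using sub circuit_M_iff_min_support[OF S] by blast
  with D(2,3) show ?thesis
    unfolding linked_M_def by blast
qed

lemma components_M_subset: "C \<in> components_M A K S \<Longrightarrow> C \<subseteq> S"
  unfolding components_M_def by auto

lemma connected_components_M:
  assumes K: "is_subspace (dim_row A) K" and S: "S \<subseteq> {..<dim_col A}"
    and C: "C \<in> components_M A K S"
  shows "connected_M A K C"
  unfolding connected_M_def
proof (intro ballI impI)
  obtain x0 where C_eq: "C = {y\<in>S. linked_M A K S x0 y}"
    using C unfolding components_M_linked by blast
  note trans = linked_M_trans[OF K S]
  fix y z
  assume yz: "y \<in> C" "z \<in> C" "y \<noteq> z"
  have "linked_M A K S y z"
    using trans[OF linked_M_sym] yz(1,2) C_eq by blast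
  then obtain D where D: "circuit_M A K S D" "y \<in> D" "z \<in> D"
    using yz(3) unfolding linked_M_def by blast
  have "D \<subseteq> C"
  proof
    fix w
    assume "w \<in> D"
    then have "linked_M A K S y w" "w \<in> S"
      using D unfolding linked_M_def circuit_M_def by blast+
    then show "w \<in> C"
      using trans yz(1) C_eq by blast
  qed
  then show "\<exists>D. circuit_M A K C D \<and> y \<in> D \<and> z \<in> D"
    using D circuit_M_restrict[OF components_M_subset[OF C]] by blast
qed

section \<open>Unfolding contraction*-depth\<close>

definition all_loops :: "'f::field mat \<Rightarrow> 'f vec set \<Rightarrow> nat set \<Rightarrow> bool" where
  "all_loops A K S \<longleftrightarrow> (\<forall>c\<in>S. dependent_M A K {c})"

lemma rank_M_eq_0_iff:
  assumes "S \<subseteq> {..<dim_col A}"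
  shows "rank_M A K S = 0 \<longleftrightarrow> all_loops A K S"
proof (cases "all_loops A K S")
  case True
  have "{card T | T. T \<subseteq> S \<and> \<not> dependent_M A K T} = {0}"
  proof (intro equalityI subsetI)
    fix k
    assume "k \<in> {card T | T. T \<subseteq> S \<and> \<not> dependent_M A K T}"
    then obtain T where T: "k = card T" "T \<subseteq> S" "\<not> dependent_M A K T"
      by blast
    have "T = {}"
    proof (rule ccontr)
      assume "T \<noteq> {}"
      then obtain c where "c \<in> T"
        by blast
      with True T(2,3) assms show False
        using dependent_M_mono[of A K "{c}" T] unfolding all_loops_def by blast
    qed
    with T(1) show "k \<in> {0}"
      by simp
  next
    have "\<not> dependent_M A K {}"
      unfolding dependent_M_def by simp
    then show "k \<in> {card T | T. T \<subseteq> S \<and> \<not> dependent_M A K T}" if "k \<in> {0}" for k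
      using that by force
  qed
  with True show ?thesis
    unfolding rank_M_def by simp
next
  case False
  then obtain c where "c \<in> S" "\<not> dependent_M A K {c}"
    unfolding all_loops_def by blast
  then have "card {c} \<in> {card T | T. T \<subseteq> S \<and> \<not> dependent_M A K T}"
    by blast
  moreover have "finite {card T | T. T \<subseteq> S \<and> \<not> dependent_M A K T}"
    using finite_subset[OF assms] by simp
  ultimately have "card {c} \<le> rank_M A K S"
    unfolding rank_M_def by (rule Max_ge[rotated])
  with False show ?thesis
    by simp
qed

lemma col_notin_if_not_dependent_M:
  assumes "c < dim_col A" "\<not> dependent_M A K {c}"
  shows "col A c \<notin> K"
proof
  assume "col A c \<in> K"
  moreover have "lincomb_cols A (\<lambda>_. 1) {c} = col A c"
    unfolding lincomb_cols_def col_def by simp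
  ultimately have "dependent_M A K {c}"
    using assms(1) unfolding dependent_M_def by (intro conjI exI[of _ "\<lambda>_. 1"]) auto
  with assms(2) show False ..
qed

lemma is_subspace_zero: "is_subspace m {0\<^sub>v m}"
  unfolding is_subspace_def by auto

lemma is_subspace_add_span:
  assumes K: "is_subspace m K" and v: "v \<in> carrier_vec m"
  shows "is_subspace m (add_span K v)"
  unfolding is_subspace_def
proof (intro conjI ballI allI)
  have Kc: "K \<subseteq> carrier_vec m"
    using K unfolding is_subspace_def by blast
  show "add_span K v \<subseteq> carrier_vec m"
    using Kc v unfolding add_span_def by auto
  show "0\<^sub>v m \<in> add_span K v"
    using K v unfolding is_subspace_def add_span_def by (auto intro!: exI[of _ "0\<^sub>v m"] exI[of _ 0])
  fix x y a
  assume "x \<in> add_span K v" "y \<in> add_span K v"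
  then obtain k a1 l b1 where x: "x = k + a1 \<cdot>\<^sub>v v" "k \<in> K" and y: "y = l + b1 \<cdot>\<^sub>v v" "l \<in> K"
    unfolding add_span_def by blast
  have "x + y = (k + l) + (a1 + b1) \<cdot>\<^sub>v v"
    using x y Kc v by (intro eq_vecI) (auto simp: algebra_simps)
  moreover have "k + l \<in> K"
    using K x y unfolding is_subspace_def by blast
  ultimately show "x + y \<in> add_span K v"
    unfolding add_span_def by blast
  have "a \<cdot>\<^sub>v x = a \<cdot>\<^sub>v k + (a * a1) \<cdot>\<^sub>v v"
    using x Kc v by (intro eq_vecI) (auto simp: algebra_simps)
  moreover have "a \<cdot>\<^sub>v k \<in> K"
    using K x unfolding is_subspace_def by blast
  ultimately show "a \<cdot>\<^sub>v x \<in> add_span K v"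
    unfolding add_span_def by blast
qed

lemma subset_add_span:
  assumes "is_subspace m K" "v \<in> carrier_vec m"
  shows "K \<subseteq> add_span K v"
proof
  fix k
  assume k: "k \<in> K"
  then have "k = k + 0 \<cdot>\<^sub>v v"
    using assms unfolding is_subspace_def by (intro eq_vecI) auto
  with k show "k \<in> add_span K v"
    unfolding add_span_def by blast
qed

lemma mem_add_span:
  assumes "is_subspace m K" "v \<in> carrier_vec m"
  shows "v \<in> add_span K v"
proof -
  have "v = 0\<^sub>v m + 1 \<cdot>\<^sub>v v"
    using assms(2) by (intro eq_vecI) auto
  moreover have "0\<^sub>v m \<in> K"
    using assms(1) unfolding is_subspace_def by blast
  ultimately show ?thesis
    unfolding add_span_def by blast
qed

lemma csd_le_mono: "csd_le A K S d \<Longrightarrow> d \<le> d' \<Longrightarrow> csd_le A K S d'"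
proof (induction arbitrary: d' rule: csd_le.induct)
  case (rank0 K S d)
  show ?case by (rule csd_le.rank0) (rule rank0.hyps)
next
  case (disconn K S d)
  then show ?case by (blast intro: csd_le.disconn)
next
  case (conn K S v d)
  then obtain d'' where "d' = Suc d''" "d \<le> d''"
    by (cases d') auto
  with conn show ?case by (blast intro: csd_le.conn)
qed

definition csd_step :: "'f::field mat \<Rightarrow> 'f vec set \<Rightarrow> nat set \<Rightarrow> nat \<Rightarrow> bool" where
  "csd_step A K S d \<longleftrightarrow>
     (\<exists>d' v. d = Suc d' \<and> v \<in> carrier_vec (dim_row A) \<and> csd_le A (add_span K v) S d')"

lemma csd_le_iff:
  assumes "S \<subseteq> {..<dim_col A}"
  shows "csd_le A K S d \<longleftrightarrow> all_loops A K S \<or>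
    (\<not> connected_M A K S \<and> (\<forall>C\<in>components_M A K S. csd_le A K C d)) \<or>
    (connected_M A K S \<and> csd_step A K S d)"
proof
  assume "csd_le A K S d"
  then show "all_loops A K S \<or> (\<not> connected_M A K S \<and> (\<forall>C\<in>components_M A K S. csd_le A K C d)) \<or>
    (connected_M A K S \<and> csd_step A K S d)"
    by cases (auto simp: rank_M_eq_0_iff[OF assms] csd_step_def)
next
  assume "all_loops A K S \<or> (\<not> connected_M A K S \<and> (\<forall>C\<in>components_M A K S. csd_le A K C d)) \<or>
    (connected_M A K S \<and> csd_step A K S d)"
  then show "csd_le A K S d"
    using rank_M_eq_0_iff[OF assms]
    by (cases "rank_M A K S = 0") (auto simp: csd_step_def intro: csd_le.intros)
qed

lemma csd_le_connected_iff:
  assumes "C \<subseteq> {..<dim_col A}" "connected_M A K C"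
  shows "csd_le A K C d \<longleftrightarrow> all_loops A K C \<or> csd_step A K C d"
  using csd_le_iff[OF assms(1)] assms(2) by blast

lemma card_cols_outside_add_span:
  assumes "is_subspace (dim_row A) K" "finite S" "c \<in> {c\<in>S. col A c \<notin> K}"
  shows "card {c'\<in>S. col A c' \<notin> add_span K (col A c)} < card {c\<in>S. col A c \<notin> K}"
proof -
  have vc: "col A c \<in> carrier_vec (dim_row A)"
    by simp
  have "{c'\<in>S. col A c' \<notin> add_span K (col A c)} \<subseteq> {c\<in>S. col A c \<notin> K} - {c}"
    using subset_add_span[OF assms(1) vc] mem_add_span[OF assms(1) vc] by auto
  then have "card {c'\<in>S. col A c' \<notin> add_span K (col A c)} \<le> card ({c\<in>S. col A c \<notin> K} - {c})"
    using assms(2) by (intro card_mono) auto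
  moreover have "card ({c\<in>S. col A c \<notin> K} - {c}) < card {c\<in>S. col A c \<notin> K}"
    using assms(2,3) by (intro card_Diff1_less) auto
  ultimately show ?thesis
    by linarith
qed

lemma card_components_M_less:
  assumes "is_subspace (dim_row A) K" "S \<subseteq> {..<dim_col A}"
    and "C \<in> components_M A K S" "\<not> connected_M A K S"
  shows "card C < card S"
proof -
  have "C \<noteq> S"
    using connected_components_M[OF assms(1-3)] assms(4) by blast
  moreover have "finite S"
    using assms(2) finite_subset by blast
  ultimately show ?thesis
    using components_M_subset[OF assms(3)] by (meson psubsetI psubset_card_mono)
qed

text \<open>Contracting a column that is not yet in \<open>K\<close> decreases the number of such columns.\<close>

lemma csd_le_card_cols_outside:
  assumes "is_subspace (dim_row A) K" "S \<subseteq> {..<dim_col A}"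
  shows "csd_le A K S (card {c\<in>S. col A c \<notin> K})"
  using assms
proof (induction "card S + card {c\<in>S. col A c \<notin> K}" arbitrary: S K rule: less_induct)
  case less
  let ?X = "{c\<in>S. col A c \<notin> K}"
  have fS: "finite S"
    using less.prems(2) finite_subset by blast
  show ?case
  proof (cases "rank_M A K S = 0")
    case True
    then show ?thesis by (rule csd_le.rank0)
  next
    case r: False
    then obtain c where c: "c \<in> S" "\<not> dependent_M A K {c}"
      using rank_M_eq_0_iff[OF less.prems(2), where K=K] unfolding all_loops_def by auto
    then have cX: "c \<in> ?X"
      using col_notin_if_not_dependent_M less.prems(2) by blast
    show ?thesis
    proof (cases "connected_M A K S")
      case True
      define K' where "K' = add_span K (col A c)"
      have vc: "col A c \<in> carrier_vec (dim_row A)"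
        by simp
      have K': "is_subspace (dim_row A) K'"
        unfolding K'_def using is_subspace_add_span[OF less.prems(1) vc] .
      have lt: "card {c'\<in>S. col A c' \<notin> K'} < card ?X"
        unfolding K'_def using card_cols_outside_add_span[OF less.prems(1) fS cX] .
      have "csd_le A K' S (card {c'\<in>S. col A c' \<notin> K'})"
        using less.hyps[OF _ K' less.prems(2)] lt by simp
      then have "csd_le A K' S (card ?X - 1)"
        by (rule csd_le_mono) (use lt in simp)
      then have "csd_le A K S (Suc (card ?X - 1))"
        unfolding K'_def by (rule csd_le.conn[OF r True vc])
      then show ?thesis
        using lt by simp
    next
      case nc: False
      show ?thesis
      proof (rule csd_le.disconn[OF r nc])
        fix C
        assume C: "C \<in> components_M A K S"
        have CS: "C \<subseteq> S"
          by (rule components_M_subset[OF C])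
        have "card C < card S"
          using card_components_M_less[OF less.prems C nc] .
        moreover have le: "card {c\<in>C. col A c \<notin> K} \<le> card ?X"
          using fS CS by (intro card_mono) auto
        ultimately have "csd_le A K C (card {c\<in>C. col A c \<notin> K})"
          using less.hyps[OF _ less.prems(1)] CS less.prems(2)
          by (meson add_less_le_mono order.trans)
        then show "csd_le A K C (card ?X)"
          using csd_le_mono le by blast
      qed
    qed
  qed
qed

lemma csd_matroid_le_iff: "csd_matroid A \<le> d \<longleftrightarrow> csd_le A {0\<^sub>v (dim_row A)} {..<dim_col A} d"
proof -
  let ?P = "csd_le A {0\<^sub>v (dim_row A)} {..<dim_col A}"
  have "?P (LEAST d. ?P d)"
    using csd_le_card_cols_outside[OF is_subspace_zero order.refl] by (rule LeastI)
  then show ?thesis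
    unfolding csd_matroid_def csd_def using csd_le_mono Least_le by blast
qed

section \<open>Derived connectives and closure\<close>

definition Or :: "'f cmso \<Rightarrow> 'f cmso \<Rightarrow> 'f cmso" where
  "Or p q = Neg (Conj (Neg p) (Neg q))"

definition Imp :: "'f cmso \<Rightarrow> 'f cmso \<Rightarrow> 'f cmso" where
  "Imp p q = Neg (Conj p (Neg q))"

definition Iff :: "'f cmso \<Rightarrow> 'f cmso \<Rightarrow> 'f cmso" where
  "Iff p q = Conj (Imp p q) (Imp q p)"

definition All1 :: "nat \<Rightarrow> 'f cmso \<Rightarrow> 'f cmso" where
  "All1 x p = Neg (Ex1 x (Neg p))"

definition All2 :: "nat \<Rightarrow> 'f cmso \<Rightarrow> 'f cmso" where
  "All2 X p = Neg (Ex2 X (Neg p))"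

definition TT :: "'f cmso" where
  "TT = All1 0 (Eq 0 0)"

definition FF :: "'f cmso" where
  "FF = Neg TT"

fun Ors :: "'f cmso list \<Rightarrow> 'f cmso" where
  "Ors [] = FF"
| "Ors (p # ps) = Or p (Ors ps)"

fun Ands :: "'f cmso list \<Rightarrow> 'f cmso" where
  "Ands [] = TT"
| "Ands (p # ps) = Conj p (Ands ps)"

definition list_of :: "'a set \<Rightarrow> 'a list" where
  "list_of S = (SOME xs. set xs = S)"

definition Or_over :: "'a set \<Rightarrow> ('a \<Rightarrow> 'f cmso) \<Rightarrow> 'f cmso" where
  "Or_over S f = Ors (map f (list_of S))"

definition And_over :: "'a set \<Rightarrow> ('a \<Rightarrow> 'f cmso) \<Rightarrow> 'f cmso" where
  "And_over S f = Ands (map f (list_of S))"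

definition LetSet :: "nat \<Rightarrow> nat \<Rightarrow> 'f cmso \<Rightarrow> 'f cmso \<Rightarrow> 'f cmso" where
  "LetSet X y \<psi> \<chi> = Ex2 X (Conj (All1 y (Iff (Mem y X) \<psi>)) \<chi>)"

lemma set_list_of: "finite S \<Longrightarrow> set (list_of S) = S"
  unfolding list_of_def by (rule someI_ex) (rule finite_list)

lemma sat_Or [simp]: "sat A \<sigma> \<tau> (Or p q) \<longleftrightarrow> sat A \<sigma> \<tau> p \<or> sat A \<sigma> \<tau> q"
  by (simp add: Or_def)

lemma sat_Imp [simp]: "sat A \<sigma> \<tau> (Imp p q) \<longleftrightarrow> (sat A \<sigma> \<tau> p \<longrightarrow> sat A \<sigma> \<tau> q)"
  by (simp add: Imp_def)

lemma sat_Iff [simp]: "sat A \<sigma> \<tau> (Iff p q) \<longleftrightarrow> (sat A \<sigma> \<tau> p \<longleftrightarrow> sat A \<sigma> \<tau> q)"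
  by (auto simp: Iff_def)

lemma sat_All1 [simp]: "sat A \<sigma> \<tau> (All1 x p) \<longleftrightarrow> (\<forall>e\<in>univ_S A. sat A (\<sigma>(x := e)) \<tau> p)"
  by (simp add: All1_def)

lemma sat_All2 [simp]:
  "sat A \<sigma> \<tau> (All2 X p) \<longleftrightarrow> (\<forall>E. E \<subseteq> univ_S A \<longrightarrow> sat A \<sigma> (\<tau>(X := E)) p)"
  by (simp add: All2_def)

lemma sat_TT [simp]: "sat A \<sigma> \<tau> TT"
  by (simp add: TT_def)

lemma sat_FF [simp]: "\<not> sat A \<sigma> \<tau> FF"
  by (simp add: FF_def)

lemma sat_Ors [simp]: "sat A \<sigma> \<tau> (Ors ps) \<longleftrightarrow> (\<exists>p\<in>set ps. sat A \<sigma> \<tau> p)"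
  by (induction ps) auto

lemma sat_Ands [simp]: "sat A \<sigma> \<tau> (Ands ps) \<longleftrightarrow> (\<forall>p\<in>set ps. sat A \<sigma> \<tau> p)"
  by (induction ps) auto

lemma sat_Or_over [simp]:
  "finite S \<Longrightarrow> sat A \<sigma> \<tau> (Or_over S f) \<longleftrightarrow> (\<exists>s\<in>S. sat A \<sigma> \<tau> (f s))"
  by (simp add: Or_over_def set_list_of)

lemma sat_And_over [simp]:
  "finite S \<Longrightarrow> sat A \<sigma> \<tau> (And_over S f) \<longleftrightarrow> (\<forall>s\<in>S. sat A \<sigma> \<tau> (f s))"
  by (simp add: And_over_def set_list_of)

lemma sat_LetSet:
  assumes "\<And>E e. e \<in> univ_S A \<Longrightarrow> sat A (\<sigma>(y := e)) (\<tau>(X := E)) \<psi> \<longleftrightarrow> e \<in> P"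
  shows "sat A \<sigma> \<tau> (LetSet X y \<psi> \<chi>) \<longleftrightarrow> sat A \<sigma> (\<tau>(X := univ_S A \<inter> P)) \<chi>"
proof -
  have "(E \<subseteq> univ_S A \<and> (\<forall>e\<in>univ_S A. e \<in> E \<longleftrightarrow> sat A (\<sigma>(y := e)) (\<tau>(X := E)) \<psi>))
    \<longleftrightarrow> E = univ_S A \<inter> P" for E
    using assms by blast
  moreover have "sat A \<sigma> \<tau> (LetSet X y \<psi> \<chi>) \<longleftrightarrow> (\<exists>E. (E \<subseteq> univ_S A \<and>
      (\<forall>e\<in>univ_S A. e \<in> E \<longleftrightarrow> sat A (\<sigma>(y := e)) (\<tau>(X := E)) \<psi>)) \<and> sat A \<sigma> (\<tau>(X := E)) \<chi>)"
    unfolding LetSet_def by auto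
  ultimately show ?thesis
    by (simp only:) simp
qed

lemma sat_foldr_Ex2:
  "sat A \<sigma> \<tau> (foldr Ex2 Xs \<phi>) \<longleftrightarrow>
   (\<exists>\<tau>'. (\<forall>X. X \<notin> set Xs \<longrightarrow> \<tau>' X = \<tau> X) \<and> (\<forall>X\<in>set Xs. \<tau>' X \<subseteq> univ_S A) \<and> sat A \<sigma> \<tau>' \<phi>)"
proof (induction Xs arbitrary: \<tau>)
  case Nil
  have "(\<forall>X. \<tau>' X = \<tau> X) \<longleftrightarrow> \<tau>' = \<tau>" for \<tau>' :: "nat \<Rightarrow> (nat + nat) set"
    by auto
  then show ?case
    by simp
next
  case (Cons Y Xs)
  show ?case
  proof
    assume "sat A \<sigma> \<tau> (foldr Ex2 (Y # Xs) \<phi>)"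
    then obtain E \<tau>' where E: "E \<subseteq> univ_S A"
      and \<tau>': "\<forall>X. X \<notin> set Xs \<longrightarrow> \<tau>' X = (\<tau>(Y := E)) X" "\<forall>X\<in>set Xs. \<tau>' X \<subseteq> univ_S A"
        "sat A \<sigma> \<tau>' \<phi>"
      using Cons.IH by auto
    have "\<forall>X. X \<notin> set (Y # Xs) \<longrightarrow> \<tau>' X = \<tau> X"
      using \<tau>'(1) by auto
    moreover have "\<forall>X\<in>set (Y # Xs). \<tau>' X \<subseteq> univ_S A"
      using \<tau>'(1,2) E by (cases "Y \<in> set Xs") auto
    ultimately show "\<exists>\<tau>'. (\<forall>X. X \<notin> set (Y # Xs) \<longrightarrow> \<tau>' X = \<tau> X) \<and>
        (\<forall>X\<in>set (Y # Xs). \<tau>' X \<subseteq> univ_S A) \<and> sat A \<sigma> \<tau>' \<phi>"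
      using \<tau>'(3) by blast
  next
    assume "\<exists>\<tau>'. (\<forall>X. X \<notin> set (Y # Xs) \<longrightarrow> \<tau>' X = \<tau> X) \<and>
        (\<forall>X\<in>set (Y # Xs). \<tau>' X \<subseteq> univ_S A) \<and> sat A \<sigma> \<tau>' \<phi>"
    then obtain \<tau>' where \<tau>': "\<forall>X. X \<notin> set (Y # Xs) \<longrightarrow> \<tau>' X = \<tau> X"
      "\<forall>X\<in>set (Y # Xs). \<tau>' X \<subseteq> univ_S A" "sat A \<sigma> \<tau>' \<phi>"
      by blast
    then have "sat A \<sigma> (\<tau>(Y := \<tau>' Y)) (foldr Ex2 Xs \<phi>)"
      by (intro Cons.IH[THEN iffD2] exI[of _ \<tau>']) auto
    with \<tau>'(2) show "sat A \<sigma> \<tau> (foldr Ex2 (Y # Xs) \<phi>)"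
      by auto
  qed
qed

text \<open>Binding all free variables, universally for elements and existentially for sets, turns any
  formula into a sentence; this spares us from tracking free variables through the construction.\<close>

definition close :: "'f cmso \<Rightarrow> 'f cmso" where
  "close \<phi> = foldr All1 (list_of (fv1 \<phi>)) (foldr Ex2 (list_of (fv2 \<phi>)) \<phi>)"

lemma finite_fv: "finite (fv1 \<phi>)" "finite (fv2 \<phi>)"
  by (induction \<phi>) auto

lemma sentence_close: "sentence (close \<phi>)"
proof -
  have "fv1 (foldr All1 Xs \<psi>) = fv1 \<psi> - set Xs" "fv2 (foldr All1 Xs \<psi>) = fv2 \<psi>"
    for Xs and \<psi> :: "'a cmso"
    by (induction Xs) (auto simp: All1_def)
  moreover have "fv1 (foldr Ex2 Xs \<psi>) = fv1 \<psi>" "fv2 (foldr Ex2 Xs \<psi>) = fv2 \<psi> - set Xs"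
    for Xs and \<psi> :: "'a cmso"
    by (induction Xs) auto
  ultimately show ?thesis
    unfolding sentence_def close_def by (simp add: set_list_of finite_fv)
qed

text \<open>The second premise covers the empty structure, where the universal closure is vacuously true.\<close>

lemma models_close:
  assumes "\<And>\<sigma> \<tau>. sat A \<sigma> \<tau> \<phi> \<longleftrightarrow> P" and "univ_S A = {} \<Longrightarrow> P"
  shows "models A (close \<phi>) \<longleftrightarrow> P"
proof -
  have "sat A \<sigma> \<tau> (foldr Ex2 Xs \<phi>) \<longleftrightarrow> P" for Xs \<sigma> \<tau>
    using assms(1) by (induction Xs arbitrary: \<tau>) auto
  then have "sat A \<sigma> \<tau> (foldr All1 Xs (foldr Ex2 Ys \<phi>)) \<longleftrightarrow> P" for Xs Ys \<sigma> \<tau>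
    using assms(2) by (induction Xs arbitrary: \<sigma>) auto
  then show ?thesis
    unfolding models_def close_def .
qed

section \<open>Field-valued functions in set variables\<close>

definition value_var :: "nat \<Rightarrow> 'f::finite \<Rightarrow> nat" where
  "value_var n \<gamma> = n + to_nat_on (UNIV :: 'f set) \<gamma>"

lemma value_var_ge [simp]: "n \<le> value_var n \<gamma>"
  by (simp add: value_var_def)

lemma value_var_less [simp]: "value_var n (\<gamma> :: 'f::finite) < n + card (UNIV :: 'f set)"
  using bij_betw_apply[OF to_nat_on_finite[OF finite_UNIV], of \<gamma>] by (simp add: value_var_def)

lemma inj_value_var: "inj (value_var n)"
  using bij_betw_imp_inj_on[OF to_nat_on_finite[OF finite_UNIV]]
  by (simp add: value_var_def inj_on_def)

text \<open>Formulas are built with a parameter \<open>n\<close>: variables below \<open>n\<close> may occur free, those from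
  \<open>n\<close> on are used for quantification. First-order and set variables are separate, so one index may
  serve as both. \<open>ExValues n\<close> quantifies the block of set variables \<open>value_var n \<gamma>\<close>, one for
  each field element \<open>\<gamma>\<close>.\<close>

definition ExValues :: "nat \<Rightarrow> 'f::finite cmso \<Rightarrow> 'f cmso" where
  "ExValues n \<phi> = foldr Ex2 (map (value_var n) (list_of (UNIV :: 'f set))) \<phi>"

definition assign_values ::
  "nat \<Rightarrow> ('f::finite \<Rightarrow> (nat + nat) set) \<Rightarrow> (nat \<Rightarrow> (nat + nat) set) \<Rightarrow> nat \<Rightarrow> (nat + nat) set"
  where "assign_values n F \<tau> X =
    (if X \<in> range (value_var n :: 'f \<Rightarrow> nat) then F (the_inv_into UNIV (value_var n) X) else \<tau> X)"

lemma assign_values_value_var [simp]: "assign_values n F \<tau> (value_var n \<gamma>) = F \<gamma>"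
  by (simp add: assign_values_def inj_value_var the_inv_into_f_f)

lemma assign_values_less [simp]: "X < n \<Longrightarrow> assign_values n F \<tau> X = \<tau> X"
  unfolding assign_values_def by (auto simp: value_var_def)

lemma sat_ExValues:
  fixes \<phi> :: "'f::finite cmso"
  shows "sat A \<sigma> \<tau> (ExValues n \<phi>) \<longleftrightarrow>
    (\<exists>F :: 'f \<Rightarrow> (nat + nat) set. (\<forall>\<gamma>. F \<gamma> \<subseteq> univ_S A) \<and> sat A \<sigma> (assign_values n F \<tau>) \<phi>)"
proof -
  let ?R = "range (value_var n :: 'f \<Rightarrow> nat)"
  have "sat A \<sigma> \<tau> (ExValues n \<phi>) \<longleftrightarrow> (\<exists>\<tau>'. (\<forall>X. X \<notin> ?R \<longrightarrow> \<tau>' X = \<tau> X) \<and>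
      (\<forall>\<gamma> :: 'f. \<tau>' (value_var n \<gamma>) \<subseteq> univ_S A) \<and> sat A \<sigma> \<tau>' \<phi>)"
    unfolding ExValues_def sat_foldr_Ex2 by (simp add: set_list_of)
  also have "\<dots> \<longleftrightarrow> (\<exists>F :: 'f \<Rightarrow> (nat + nat) set. (\<forall>\<gamma>. F \<gamma> \<subseteq> univ_S A) \<and>
      sat A \<sigma> (assign_values n F \<tau>) \<phi>)"
  proof
    assume "\<exists>\<tau>'. (\<forall>X. X \<notin> ?R \<longrightarrow> \<tau>' X = \<tau> X) \<and>
      (\<forall>\<gamma> :: 'f. \<tau>' (value_var n \<gamma>) \<subseteq> univ_S A) \<and> sat A \<sigma> \<tau>' \<phi>"
    then obtain \<tau>' where \<tau>': "\<forall>X. X \<notin> ?R \<longrightarrow> \<tau>' X = \<tau> X"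
      "\<forall>\<gamma> :: 'f. \<tau>' (value_var n \<gamma>) \<subseteq> univ_S A" "sat A \<sigma> \<tau>' \<phi>"
      by blast
    have "assign_values n (\<lambda>\<gamma> :: 'f. \<tau>' (value_var n \<gamma>)) \<tau> = \<tau>'"
      using \<tau>'(1) by (intro ext) (auto simp: assign_values_def inj_value_var the_inv_into_f_f)
    with \<tau>'(2,3) show "\<exists>F :: 'f \<Rightarrow> (nat + nat) set. (\<forall>\<gamma>. F \<gamma> \<subseteq> univ_S A) \<and>
        sat A \<sigma> (assign_values n F \<tau>) \<phi>"
      by (intro exI[of _ "\<lambda>\<gamma> :: 'f. \<tau>' (value_var n \<gamma>)"]) simp
  next
    assume "\<exists>F :: 'f \<Rightarrow> (nat + nat) set. (\<forall>\<gamma>. F \<gamma> \<subseteq> univ_S A) \<and>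
      sat A \<sigma> (assign_values n F \<tau>) \<phi>"
    then show "\<exists>\<tau>'. (\<forall>X. X \<notin> ?R \<longrightarrow> \<tau>' X = \<tau> X) \<and>
      (\<forall>\<gamma> :: 'f. \<tau>' (value_var n \<gamma>) \<subseteq> univ_S A) \<and> sat A \<sigma> \<tau>' \<phi>"
      by (metis assign_values_def assign_values_value_var)
  qed
  finally show ?thesis .
qed

definition UniqueValue :: "nat \<Rightarrow> ('f::finite \<Rightarrow> nat) \<Rightarrow> 'f cmso" where
  "UniqueValue x V =
     Or_over UNIV (\<lambda>\<gamma>. Conj (Mem x (V \<gamma>)) (And_over {\<gamma>'. \<gamma>' \<noteq> \<gamma>} (\<lambda>\<gamma>'. Neg (Mem x (V \<gamma>')))))"

lemma sat_UniqueValue: "sat A \<sigma> \<tau> (UniqueValue x V) \<longleftrightarrow> (\<exists>!\<gamma>. \<sigma> x \<in> \<tau> (V \<gamma>))"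
  unfolding UniqueValue_def Ex1_def by auto

lemma Ex1_value_iff_fun:
  "(\<forall>e\<in>D. \<exists>!\<gamma>. e \<in> F \<gamma>) \<longleftrightarrow> (\<exists>f. \<forall>e\<in>D. \<forall>\<gamma>. e \<in> F \<gamma> \<longleftrightarrow> f e = \<gamma>)"
proof
  assume unique: "\<forall>e\<in>D. \<exists>!\<gamma>. e \<in> F \<gamma>"
  have "e \<in> F \<gamma> \<longleftrightarrow> (THE \<gamma>. e \<in> F \<gamma>) = \<gamma>" if "e \<in> D" for e \<gamma>
    using unique that by (metis the1_equality theI')
  then show "\<exists>f. \<forall>e\<in>D. \<forall>\<gamma>. e \<in> F \<gamma> \<longleftrightarrow> f e = \<gamma>"
    by (intro exI[of _ "\<lambda>e. THE \<gamma>. e \<in> F \<gamma>"]) blast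
qed auto

definition encodes_fun ::
  "(nat \<Rightarrow> (nat + nat) set) \<Rightarrow> ('f \<Rightarrow> nat) \<Rightarrow> (nat + nat) set \<Rightarrow> (nat + nat \<Rightarrow> 'f) \<Rightarrow> bool" where
  "encodes_fun \<tau> V D f \<longleftrightarrow> (\<forall>e\<in>D. \<forall>\<gamma>. e \<in> \<tau> (V \<gamma>) \<longleftrightarrow> f e = \<gamma>)"

text \<open>\<open>ExFun b G \<phi>\<close>: there is a function \<open>f\<close> from the elements satisfying the guard \<open>G\<close>
  (in the first-order variable \<open>b\<close>) to the field such that \<open>\<phi>\<close>; the set variable
  \<open>value_var b \<gamma>\<close> holds \<open>f\<close>'s preimage of \<open>\<gamma>\<close>.\<close>

definition ExFun :: "nat \<Rightarrow> 'f::finite cmso \<Rightarrow> 'f cmso \<Rightarrow> 'f cmso" where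
  "ExFun b G \<phi> = ExValues b (Conj (All1 b (Imp G (UniqueValue b (value_var b)))) \<phi>)"

lemma sat_ExFun:
  fixes \<phi> :: "'f::finite cmso"
  assumes dom: "\<And>(F :: 'f \<Rightarrow> (nat + nat) set) e. e \<in> univ_S A \<Longrightarrow>
      sat A (\<sigma>(b := e)) (assign_values b F \<tau>) G \<longleftrightarrow> e \<in> D"
    and D: "D \<subseteq> univ_S A"
    and body: "\<And>(F :: 'f \<Rightarrow> (nat + nat) set) (f :: nat + nat \<Rightarrow> 'f).
      encodes_fun (assign_values b F \<tau>) (value_var b) D f \<Longrightarrow>
      sat A \<sigma> (assign_values b F \<tau>) \<phi> \<longleftrightarrow> P f"
  shows "sat A \<sigma> \<tau> (ExFun b G \<phi>) \<longleftrightarrow> (\<exists>f. P f)"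
proof -
  have "sat A \<sigma> (assign_values b F \<tau>) (All1 b (Imp G (UniqueValue b (value_var b))))
      \<longleftrightarrow> (\<forall>e\<in>D. \<exists>!\<gamma>. e \<in> F \<gamma>)" for F :: "'f \<Rightarrow> (nat + nat) set"
    using dom D by (auto simp: sat_UniqueValue)
  then have "sat A \<sigma> \<tau> (ExFun b G \<phi>) \<longleftrightarrow> (\<exists>F :: 'f \<Rightarrow> (nat + nat) set.
      (\<forall>\<gamma>. F \<gamma> \<subseteq> univ_S A) \<and> (\<forall>e\<in>D. \<exists>!\<gamma>. e \<in> F \<gamma>) \<and> sat A \<sigma> (assign_values b F \<tau>) \<phi>)"
    unfolding ExFun_def sat_ExValues by simp
  also have "\<dots> \<longleftrightarrow> (\<exists>f. P f)"
  proof
    assume "\<exists>F :: 'f \<Rightarrow> (nat + nat) set.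
      (\<forall>\<gamma>. F \<gamma> \<subseteq> univ_S A) \<and> (\<forall>e\<in>D. \<exists>!\<gamma>. e \<in> F \<gamma>) \<and> sat A \<sigma> (assign_values b F \<tau>) \<phi>"
    then obtain F :: "'f \<Rightarrow> (nat + nat) set" and f
      where "\<forall>e\<in>D. \<forall>\<gamma>. e \<in> F \<gamma> \<longleftrightarrow> f e = \<gamma>" "sat A \<sigma> (assign_values b F \<tau>) \<phi>"
      using Ex1_value_iff_fun by metis
    with body[of F f] show "\<exists>f. P f"
      by (auto simp: encodes_fun_def)
  next
    assume "\<exists>f. P f"
    then obtain f where "P f"
      by blast
    define F :: "'f \<Rightarrow> (nat + nat) set" where "F \<gamma> = {e\<in>D. f e = \<gamma>}" for \<gamma>
    have "encodes_fun (assign_values b F \<tau>) (value_var b) D f"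
      by (auto simp: encodes_fun_def F_def)
    with \<open>P f\<close> body[of F f] D show "\<exists>F :: 'f \<Rightarrow> (nat + nat) set.
      (\<forall>\<gamma>. F \<gamma> \<subseteq> univ_S A) \<and> (\<forall>e\<in>D. \<exists>!\<gamma>. e \<in> F \<gamma>) \<and> sat A \<sigma> (assign_values b F \<tau>) \<phi>"
      by (intro exI[of _ F]) (auto simp: F_def)
  qed
  finally show ?thesis .
qed

lemma ex_fun_comp_Inr_iff: "(\<exists>f. P (f \<circ> Inr)) \<longleftrightarrow> (\<exists>\<alpha>. P \<alpha>)"
proof
  assume "\<exists>\<alpha>. P \<alpha>"
  then obtain \<alpha> where "P \<alpha>" ..
  moreover have "(\<alpha> \<circ> projr) \<circ> Inr = \<alpha>"
    by (simp add: fun_eq_iff)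
  ultimately show "\<exists>f. P (f \<circ> Inr)"
    by metis
qed auto

lemma ex_fun_vec_Inl_iff: "(\<exists>f. P (vec m (f \<circ> Inl))) \<longleftrightarrow> (\<exists>v\<in>carrier_vec m. P v)"
proof
  assume "\<exists>v\<in>carrier_vec m. P v"
  then obtain v where "v \<in> carrier_vec m" "P v" ..
  moreover have "vec m ((\<lambda>e. v $ projl e) \<circ> Inl) = v" if "v \<in> carrier_vec m"
    using that by (intro eq_vecI) auto
  ultimately show "\<exists>f. P (vec m (f \<circ> Inl))"
    by metis
qed auto

text \<open>A vector \<open>v\<close> indexed by the rows is stored in set variables \<open>V \<gamma>\<close>, one for each field
  element \<open>\<gamma>\<close>, which partition the rows according to the value of \<open>v\<close>.\<close>

definition encodes_vec ::
  "'f::zero mat \<Rightarrow> (nat \<Rightarrow> (nat + nat) set) \<Rightarrow> ('f \<Rightarrow> nat) \<Rightarrow> 'f vec \<Rightarrow> bool" where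
  "encodes_vec A \<tau> V v \<longleftrightarrow>
     v \<in> carrier_vec (dim_row A) \<and> (\<forall>i<dim_row A. \<forall>\<gamma>. Inl i \<in> \<tau> (V \<gamma>) \<longleftrightarrow> v $ i = \<gamma>)"

definition vars_below :: "('f \<Rightarrow> nat) list \<Rightarrow> nat \<Rightarrow> bool" where
  "vars_below Vs n \<longleftrightarrow> (\<forall>V\<in>set Vs. \<forall>\<gamma>. V \<gamma> < n)"

lemma vars_below_mono: "vars_below Vs n \<Longrightarrow> n \<le> n' \<Longrightarrow> vars_below Vs n'"
  unfolding vars_below_def using less_le_trans by blast

lemma encodes_vecs_cong:
  assumes "vars_below Vs n" "\<And>X. X < n \<Longrightarrow> \<tau>' X = \<tau> X"
  shows "list_all2 (encodes_vec A \<tau>') Vs vs \<longleftrightarrow> list_all2 (encodes_vec A \<tau>) Vs vs"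
proof -
  have "encodes_vec A \<tau>' V v \<longleftrightarrow> encodes_vec A \<tau> V v" if "V \<in> set Vs" for V v
    using assms that unfolding vars_below_def encodes_vec_def by auto
  then show ?thesis
    by (auto simp: list_all2_conv_all_nth)
qed

lemma encodes_vecs_upd:
  "vars_below Vs n \<Longrightarrow>
    list_all2 (encodes_vec A (\<tau>(n := E))) Vs vs \<longleftrightarrow> list_all2 (encodes_vec A \<tau>) Vs vs"
  by (rule encodes_vecs_cong) auto

lemma sat_ExFun_RowP:
  fixes \<phi> :: "'f::{field,finite} cmso"
  assumes "\<And>(F :: 'f \<Rightarrow> (nat + nat) set) v. encodes_vec A (assign_values b F \<tau>) (value_var b) v \<Longrightarrow>
    sat A \<sigma> (assign_values b F \<tau>) \<phi> \<longleftrightarrow> P v"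
  shows "sat A \<sigma> \<tau> (ExFun b (RowP b) \<phi>) \<longleftrightarrow> (\<exists>v\<in>carrier_vec (dim_row A). P v)"
proof -
  have "sat A \<sigma> \<tau> (ExFun b (RowP b) \<phi>) \<longleftrightarrow> (\<exists>f :: nat + nat \<Rightarrow> 'f. P (vec (dim_row A) (f \<circ> Inl)))"
  proof (rule sat_ExFun)
    fix F :: "'f \<Rightarrow> (nat + nat) set" and f :: "nat + nat \<Rightarrow> 'f"
    assume "encodes_fun (assign_values b F \<tau>) (value_var b) (Inl ` {..<dim_row A}) f"
    then have "encodes_vec A (assign_values b F \<tau>) (value_var b) (vec (dim_row A) (f \<circ> Inl))"
      by (auto simp: encodes_fun_def encodes_vec_def)
    then show "sat A \<sigma> (assign_values b F \<tau>) \<phi> \<longleftrightarrow> P (vec (dim_row A) (f \<circ> Inl))"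
      by (rule assms)
  qed (auto simp: univ_S_def)
  then show ?thesis
    unfolding ex_fun_vec_Inl_iff .
qed

definition span_list :: "nat \<Rightarrow> 'f::field vec list \<Rightarrow> 'f vec set" where
  "span_list m vs = {vec m (\<lambda>i. \<Sum>j<length vs. \<beta> ! j * vs ! j $ i) | \<beta>. length \<beta> = length vs}"

lemma span_list_Nil: "span_list m [] = {0\<^sub>v m}"
  unfolding span_list_def by (auto simp: zero_vec_def)

lemma is_subspace_span_list: "is_subspace m (span_list m vs)"
  unfolding is_subspace_def
proof (intro conjI ballI allI)
  let ?comb = "\<lambda>\<beta>. vec m (\<lambda>i. \<Sum>j<length vs. \<beta> ! j * vs ! j $ i)"
  show "span_list m vs \<subseteq> carrier_vec m"
    unfolding span_list_def by auto
  have "0\<^sub>v m = ?comb (replicate (length vs) 0)"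
    by (intro eq_vecI) auto
  then show "0\<^sub>v m \<in> span_list m vs"
    unfolding span_list_def by fastforce
  fix u w a
  assume "u \<in> span_list m vs" "w \<in> span_list m vs"
  then obtain \<beta> \<beta>' where \<beta>: "length \<beta> = length vs" "u = ?comb \<beta>"
    and \<beta>': "length \<beta>' = length vs" "w = ?comb \<beta>'"
    unfolding span_list_def by blast
  have "u + w = ?comb (map (\<lambda>j. \<beta> ! j + \<beta>' ! j) [0..<length vs])"
    using \<beta> \<beta>' by (intro eq_vecI) (auto simp: distrib_right sum.distrib)
  then show "u + w \<in> span_list m vs"
    unfolding span_list_def by fastforce
  have "a \<cdot>\<^sub>v u = ?comb (map (\<lambda>j. a * \<beta> ! j) [0..<length vs])"
    using \<beta> by (intro eq_vecI) (auto simp: sum_distrib_left mult.assoc)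
  then show "a \<cdot>\<^sub>v u \<in> span_list m vs"
    unfolding span_list_def by fastforce
qed

lemma sum_append_singleton:
  assumes "length \<beta> = length vs"
  shows "(\<Sum>j<length (vs @ [v]). (\<beta> @ [a]) ! j * (vs @ [v]) ! j $ i) =
    (\<Sum>j<length vs. \<beta> ! j * vs ! j $ i) + a * v $ i"
proof -
  have "(\<Sum>j<length vs. (\<beta> @ [a]) ! j * (vs @ [v]) ! j $ i) = (\<Sum>j<length vs. \<beta> ! j * vs ! j $ i)"
    using assms by (intro sum.cong) (auto simp: nth_append)
  with assms show ?thesis
    by (simp add: nth_append)
qed

lemma add_span_span_list:
  assumes v: "v \<in> carrier_vec m"
  shows "add_span (span_list m vs) v = span_list m (vs @ [v])"
proof (intro equalityI subsetI)
  fix x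
  assume "x \<in> add_span (span_list m vs) v"
  then obtain \<beta> a where \<beta>: "length \<beta> = length vs"
    and x: "x = vec m (\<lambda>i. \<Sum>j<length vs. \<beta> ! j * vs ! j $ i) + a \<cdot>\<^sub>v v"
    unfolding add_span_def span_list_def by blast
  have "x = vec m (\<lambda>i. \<Sum>j<length (vs @ [v]). (\<beta> @ [a]) ! j * (vs @ [v]) ! j $ i)"
    unfolding sum_append_singleton[OF \<beta>] using x v by (intro eq_vecI) auto
  then show "x \<in> span_list m (vs @ [v])"
    unfolding span_list_def using \<beta> by fastforce
next
  fix x
  assume "x \<in> span_list m (vs @ [v])"
  then obtain \<beta> where \<beta>: "length \<beta> = Suc (length vs)"
    and x: "x = vec m (\<lambda>i. \<Sum>j<length (vs @ [v]). \<beta> ! j * (vs @ [v]) ! j $ i)"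
    unfolding span_list_def by auto
  then have \<beta>_eq: "\<beta> = butlast \<beta> @ [last \<beta>]" "length (butlast \<beta>) = length vs"
    by (metis append_butlast_last_id list.size(3) nat.distinct(1), simp)
  have "x = vec m (\<lambda>i. \<Sum>j<length vs. butlast \<beta> ! j * vs ! j $ i) + last \<beta> \<cdot>\<^sub>v v"
    using v unfolding x
    by (subst \<beta>_eq(1), unfold sum_append_singleton[OF \<beta>_eq(2)]) (intro eq_vecI; simp)
  then show "x \<in> add_span (span_list m vs) v"
    unfolding add_span_def span_list_def using \<beta>_eq(2) by blast
qed

section \<open>Linear combinations by modular counting\<close>

definition encodes_coeffs ::
  "(nat \<Rightarrow> (nat + nat) set) \<Rightarrow> ('f \<Rightarrow> nat) \<Rightarrow> nat set \<Rightarrow> (nat \<Rightarrow> 'f) \<Rightarrow> bool" where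
  "encodes_coeffs \<tau> Al C \<alpha> \<longleftrightarrow> (\<forall>c\<in>C. \<forall>\<gamma>. Inr c \<in> \<tau> (Al \<gamma>) \<longleftrightarrow> \<alpha> c = \<gamma>)"

lemma of_nat_mod_CHAR: "of_nat (m mod CHAR('a)) = (of_nat m :: 'a::comm_ring_1)"
proof -
  have "(of_nat m :: 'a) = of_nat (m div CHAR('a)) * of_nat CHAR('a) + of_nat (m mod CHAR('a))"
    by (metis div_mult_mod_eq of_nat_add of_nat_mult)
  then show ?thesis
    by simp
qed

lemma sum_group_value_pairs:
  fixes f g :: "nat \<Rightarrow> 'f::{comm_ring_1,finite}"
  assumes "finite C"
  shows "(\<Sum>c\<in>C. f c * g c) =
    (\<Sum>k\<in>UNIV. fst k * snd k * of_nat (card {c\<in>C. f c = fst k \<and> g c = snd k}))"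
proof -
  have "(\<Sum>c\<in>C. f c * g c) = (\<Sum>k\<in>UNIV. \<Sum>c\<in>{c\<in>C. (f c, g c) = k}. f c * g c)"
    using assms by (intro sum.group[symmetric]) auto
  also have "\<dots> = (\<Sum>k\<in>UNIV. \<Sum>c\<in>{c\<in>C. f c = fst k \<and> g c = snd k}. fst k * snd k)"
    by (intro sum.cong) auto
  finally show ?thesis
    by (simp add: mult.commute)
qed

definition CountIs :: "nat \<Rightarrow> nat \<Rightarrow> ('f::{field,finite} \<Rightarrow> nat) \<Rightarrow> 'f \<times> 'f \<Rightarrow> nat \<Rightarrow> nat \<Rightarrow> 'f cmso" where
  "CountIs x T Al k r n =
     LetSet n n (Conj (Mem n T) (Conj (Mem n (Al (fst k))) (Entry (snd k) x n)))
       (ModP r CHAR('f) n)"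

lemma sat_CountIs:
  fixes Al :: "'f::{field,finite} \<Rightarrow> nat"
  assumes "x < n" "T < n" "\<forall>\<gamma>. Al \<gamma> < n" "\<sigma> x = Inl i" "i < dim_row A"
    and "\<tau> T = Inr ` C" "C \<subseteq> {..<dim_col A}" "encodes_coeffs \<tau> Al C \<alpha>"
  shows "sat A \<sigma> \<tau> (CountIs x T Al k r n) \<longleftrightarrow>
    card {c\<in>C. \<alpha> c = fst k \<and> A $$ (i, c) = snd k} mod CHAR('f) = r mod CHAR('f)"
proof -
  let ?P = "Inr ` {c\<in>C. \<alpha> c = fst k \<and> A $$ (i, c) = snd k}"
  have "sat A (\<sigma>(n := e)) (\<tau>(n := E))
      (Conj (Mem n T) (Conj (Mem n (Al (fst k))) (Entry (snd k) x n)))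
      \<longleftrightarrow> e \<in> ?P" for e E
    using assms unfolding encodes_coeffs_def by (auto simp: less_not_refl3 subset_eq)
  then have "sat A \<sigma> \<tau> (CountIs x T Al k r n) \<longleftrightarrow> sat A \<sigma> (\<tau>(n := univ_S A \<inter> ?P)) (ModP r CHAR('f) n)"
    unfolding CountIs_def by (rule sat_LetSet)
  moreover have "univ_S A \<inter> ?P = ?P"
    using assms(7) by (auto simp: univ_S_def)
  ultimately show ?thesis
    by (simp add: card_image)
qed

text \<open>A row of a linear combination of columns is determined by the number of columns carrying each
  pair (coefficient, entry), and these numbers matter only modulo the characteristic: this is
  where the modular counting predicates of CMSO are needed.\<close>

definition RowSumIs :: "nat \<Rightarrow> nat \<Rightarrow> ('f::{field,finite} \<Rightarrow> nat) \<Rightarrow> 'f \<Rightarrow> nat \<Rightarrow> 'f cmso" where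
  "RowSumIs x T Al \<delta> n =
     Or_over {r. (\<forall>k. r k < CHAR('f)) \<and> (\<Sum>k\<in>UNIV. fst k * snd k * of_nat (r k)) = \<delta>}
       (\<lambda>r. And_over UNIV (\<lambda>k. CountIs x T Al k (r k) n))"

lemma finite_bounded_funs: "finite {r :: 'a::finite \<Rightarrow> nat. (\<forall>k. r k < p) \<and> P r}"
proof (rule finite_subset)
  show "finite {r :: 'a \<Rightarrow> nat. \<forall>k. (k \<in> UNIV \<longrightarrow> r k \<in> {..<p}) \<and> (k \<notin> UNIV \<longrightarrow> r k = 0)}"
    by (intro finite_set_of_finite_funs) auto
qed auto

lemma sat_RowSumIs:
  fixes Al :: "'f::{field,finite} \<Rightarrow> nat"
  assumes "x < n" "T < n" "\<forall>\<gamma>. Al \<gamma> < n" "\<sigma> x = Inl i" "i < dim_row A"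
    and "\<tau> T = Inr ` C" "C \<subseteq> {..<dim_col A}" "encodes_coeffs \<tau> Al C \<alpha>"
  shows "sat A \<sigma> \<tau> (RowSumIs x T Al \<delta> n) \<longleftrightarrow> (\<Sum>c\<in>C. \<alpha> c * A $$ (i, c)) = \<delta>"
proof -
  define N where "N k = card {c\<in>C. \<alpha> c = fst k \<and> A $$ (i, c) = snd k}" for k :: "'f \<times> 'f"
  have "sat A \<sigma> \<tau> (RowSumIs x T Al \<delta> n) \<longleftrightarrow> (\<exists>r. (\<forall>k. r k < CHAR('f)) \<and>
      (\<Sum>k\<in>UNIV. fst k * snd k * of_nat (r k)) = \<delta> \<and> (\<forall>k. N k mod CHAR('f) = r k mod CHAR('f)))"
    unfolding RowSumIs_def sat_Or_over[OF finite_bounded_funs] sat_And_over[OF finite_UNIV]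
      sat_CountIs[where \<sigma>=\<sigma> and x=x, OF assms] N_def
    by blast
  also have "\<dots> \<longleftrightarrow> (\<Sum>k\<in>UNIV. fst k * snd k * of_nat (N k)) = \<delta>"
  proof
    assume "\<exists>r. (\<forall>k. r k < CHAR('f)) \<and> (\<Sum>k\<in>UNIV. fst k * snd k * of_nat (r k)) = \<delta> \<and>
      (\<forall>k. N k mod CHAR('f) = r k mod CHAR('f))"
    then obtain r where r: "\<forall>k. r k < CHAR('f)" "(\<Sum>k\<in>UNIV. fst k * snd k * of_nat (r k)) = \<delta>"
      "\<forall>k. N k mod CHAR('f) = r k mod CHAR('f)"
      by blast
    then have "(of_nat (r k) :: 'f) = of_nat (N k)" for k
      by (metis mod_less of_nat_mod_CHAR)
    with r(2) show "(\<Sum>k\<in>UNIV. fst k * snd k * of_nat (N k)) = \<delta>"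
      by simp
  next
    assume "(\<Sum>k\<in>UNIV. fst k * snd k * of_nat (N k)) = \<delta>"
    moreover have "CHAR('f) > 0"
      by (simp add: finite_imp_CHAR_pos)
    ultimately show "\<exists>r. (\<forall>k. r k < CHAR('f)) \<and> (\<Sum>k\<in>UNIV. fst k * snd k * of_nat (r k)) = \<delta> \<and>
      (\<forall>k. N k mod CHAR('f) = r k mod CHAR('f))"
      by (intro exI[of _ "\<lambda>k. N k mod CHAR('f)"]) (simp add: of_nat_mod_CHAR)
  qed
  also have "(\<Sum>k\<in>UNIV. fst k * snd k * of_nat (N k)) = (\<Sum>c\<in>C. \<alpha> c * A $$ (i, c))"
    unfolding N_def using assms(7) finite_subset
    by (intro sum_group_value_pairs[symmetric]) blast
  finally show ?thesis .
qed

text \<open>The entries \<open>w\<close> in row \<open>x\<close> of the vectors stored in \<open>Vs\<close> are guessed by a finite disjunction.\<close>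

definition RowEq ::
  "nat \<Rightarrow> nat \<Rightarrow> ('f::{field,finite} \<Rightarrow> nat) \<Rightarrow> ('f \<Rightarrow> nat) list \<Rightarrow> 'f list \<Rightarrow> nat \<Rightarrow> 'f cmso"
  where "RowEq x T Al Vs \<beta> n =
    Or_over {w. length w = length Vs}
      (\<lambda>w. Conj (And_over {..<length Vs} (\<lambda>j. Mem x ((Vs ! j) (w ! j))))
        (RowSumIs x T Al (\<Sum>j<length Vs. \<beta> ! j * w ! j) n))"

lemma all_rows_iff:
  "(\<forall>e\<in>univ_S A. e \<in> Inl ` {..<dim_row A} \<longrightarrow> P e) \<longleftrightarrow> (\<forall>i<dim_row A. P (Inl i))"
  by (auto simp: univ_S_def)

lemma finite_lists_length: "finite {w :: 'a::finite list. length w = k}"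
  using finite_lists_length_eq[OF finite_UNIV, of k] by simp

lemma sat_RowEq:
  fixes Al :: "'f::{field,finite} \<Rightarrow> nat"
  assumes "x < n" "T < n" "\<forall>\<gamma>. Al \<gamma> < n" "\<sigma> x = Inl i" "i < dim_row A"
    and "\<tau> T = Inr ` C" "C \<subseteq> {..<dim_col A}" "encodes_coeffs \<tau> Al C \<alpha>"
    and vs: "list_all2 (encodes_vec A \<tau>) Vs vs"
  shows "sat A \<sigma> \<tau> (RowEq x T Al Vs \<beta> n) \<longleftrightarrow>
    (\<Sum>c\<in>C. \<alpha> c * A $$ (i, c)) = (\<Sum>j<length Vs. \<beta> ! j * vs ! j $ i)"
proof -
  have row: "\<sigma> x \<in> \<tau> ((Vs ! j) \<gamma>) \<longleftrightarrow> vs ! j $ i = \<gamma>" if "j < length Vs" for j \<gamma>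
    using vs that assms(4,5) by (auto simp: list_all2_conv_all_nth encodes_vec_def)
  have "(\<forall>j\<in>{..<length Vs}. \<sigma> x \<in> \<tau> ((Vs ! j) (w ! j))) \<longleftrightarrow> w = map (\<lambda>v. v $ i) vs"
    if "length w = length Vs" for w
    using that list_all2_lengthD[OF vs] by (auto simp: row list_eq_iff_nth_eq)
  then show ?thesis
    unfolding RowEq_def sat_Or_over[OF finite_lists_length] sat.simps(8)
      sat_And_over[OF finite_lessThan]
      sat.simps(5) sat_RowSumIs[where \<sigma>=\<sigma> and x=x, OF assms(1-8)]
    using list_all2_lengthD[OF vs] by auto
qed

definition InSpan :: "nat \<Rightarrow> ('f::{field,finite} \<Rightarrow> nat) \<Rightarrow> ('f \<Rightarrow> nat) list \<Rightarrow> nat \<Rightarrow> 'f cmso" where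
  "InSpan T Al Vs n =
     Or_over {\<beta>. length \<beta> = length Vs} (\<lambda>\<beta>. All1 n (Imp (RowP n) (RowEq n T Al Vs \<beta> (Suc n))))"

lemma sat_InSpan:
  fixes Al :: "'f::{field,finite} \<Rightarrow> nat"
  assumes "T < n" "\<forall>\<gamma>. Al \<gamma> < n"
    and "\<tau> T = Inr ` C" "C \<subseteq> {..<dim_col A}" "encodes_coeffs \<tau> Al C \<alpha>"
    and vs: "list_all2 (encodes_vec A \<tau>) Vs vs"
  shows "sat A \<sigma> \<tau> (InSpan T Al Vs n) \<longleftrightarrow> lincomb_cols A \<alpha> C \<in> span_list (dim_row A) vs"
proof -
  have "sat A (\<sigma>(n := Inl i)) \<tau> (RowEq n T Al Vs \<beta> (Suc n)) \<longleftrightarrow>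
      (\<Sum>c\<in>C. \<alpha> c * A $$ (i, c)) = (\<Sum>j<length Vs. \<beta> ! j * vs ! j $ i)" if "i < dim_row A" for i \<beta>
    using assms(1,3-6) that less_SucI[OF assms(2)[rule_format]] by (intro sat_RowEq) auto
  then have "sat A \<sigma> \<tau> (InSpan T Al Vs n) \<longleftrightarrow> (\<exists>\<beta>. length \<beta> = length vs \<and>
      (\<forall>i<dim_row A. (\<Sum>c\<in>C. \<alpha> c * A $$ (i, c)) = (\<Sum>j<length vs. \<beta> ! j * vs ! j $ i)))"
    unfolding InSpan_def sat_Or_over[OF finite_lists_length] sat_All1 sat_Imp sat.simps(1)
      fun_upd_same all_rows_iff
    using list_all2_lengthD[OF vs] by auto
  then show ?thesis
    unfolding span_list_def lincomb_cols_def by (auto simp: vec_eq_iff)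
qed

lemma Inr_mem_Inr_image [simp]: "Inr x \<in> Inr ` D \<longleftrightarrow> x \<in> D"
  by auto

lemma ball_Inr_image: "Inr ` C \<subseteq> U \<Longrightarrow> (\<forall>e\<in>U. e \<in> Inr ` C \<longrightarrow> P e) \<longleftrightarrow> (\<forall>c\<in>C. P (Inr c))"
  by blast

lemma bex_Inr_image: "Inr ` C \<subseteq> U \<Longrightarrow> (\<exists>e\<in>U. e \<in> Inr ` C \<and> P e) \<longleftrightarrow> (\<exists>c\<in>C. P (Inr c))"
  by blast

definition Dependent :: "nat \<Rightarrow> ('f::{field,finite} \<Rightarrow> nat) list \<Rightarrow> nat \<Rightarrow> 'f cmso" where
  "Dependent T Vs n =
     ExFun n (Mem n T) (Conj (Ex1 n (Conj (Mem n T) (Neg (Mem n (value_var n (0 :: 'f))))))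
       (InSpan T (value_var n) Vs (n + card (UNIV :: 'f set))))"

lemma sat_Dependent:
  fixes Vs :: "('f::{field,finite} \<Rightarrow> nat) list"
  assumes T: "T < n" "\<tau> T = Inr ` C" "C \<subseteq> {..<dim_col A}"
    and vs: "vars_below Vs n" "list_all2 (encodes_vec A \<tau>) Vs vs"
  shows "sat A \<sigma> \<tau> (Dependent T Vs n) \<longleftrightarrow> dependent_M A (span_list (dim_row A) vs) C"
proof -
  let ?K = "span_list (dim_row A) vs"
  have CU: "Inr ` C \<subseteq> univ_S A"
    using T(3) by (auto simp: univ_S_def)
  have "sat A \<sigma> \<tau> (Dependent T Vs n) \<longleftrightarrow>
      (\<exists>f :: nat + nat \<Rightarrow> 'f. (\<exists>c\<in>C. (f \<circ> Inr) c \<noteq> 0) \<and> lincomb_cols A (f \<circ> Inr) C \<in> ?K)"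
    unfolding Dependent_def
  proof (rule sat_ExFun[OF _ CU])
    fix F :: "'f \<Rightarrow> (nat + nat) set" and f :: "nat + nat \<Rightarrow> 'f"
    assume f: "encodes_fun (assign_values n F \<tau>) (value_var n) (Inr ` C) f"
    then have "encodes_coeffs (assign_values n F \<tau>) (value_var n) C (f \<circ> Inr)"
      by (simp add: encodes_fun_def encodes_coeffs_def)
    moreover have "list_all2 (encodes_vec A (assign_values n F \<tau>)) Vs vs"
      by (rule encodes_vecs_cong[OF vs(1), where \<tau>=\<tau>, THEN iffD2]) (simp_all add: vs(2))
    ultimately have "sat A \<sigma> (assign_values n F \<tau>)
        (InSpan T (value_var n) Vs (n + card (UNIV :: 'f set)))
        \<longleftrightarrow> lincomb_cols A (f \<circ> Inr) C \<in> ?K"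
      using T by (intro sat_InSpan) auto
    moreover have "sat A \<sigma> (assign_values n F \<tau>)
        (Ex1 n (Conj (Mem n T) (Neg (Mem n (value_var n (0 :: 'f))))))
        \<longleftrightarrow> (\<exists>c\<in>C. (f \<circ> Inr) c \<noteq> 0)"
      using f T(1,2) by (simp add: bex_Inr_image[OF CU] encodes_fun_def)
    ultimately show "sat A \<sigma> (assign_values n F \<tau>)
        (Conj (Ex1 n (Conj (Mem n T) (Neg (Mem n (value_var n (0 :: 'f))))))
          (InSpan T (value_var n) Vs (n + card (UNIV :: 'f set))))
      \<longleftrightarrow> (\<exists>c\<in>C. (f \<circ> Inr) c \<noteq> 0) \<and> lincomb_cols A (f \<circ> Inr) C \<in> ?K"
      by simp
  qed (use T(1,2) in auto)
  also have "\<dots> \<longleftrightarrow> dependent_M A ?K C"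
    unfolding ex_fun_comp_Inr_iff[where P="\<lambda>\<alpha>. (\<exists>c\<in>C. \<alpha> c \<noteq> 0) \<and> lincomb_cols A \<alpha> C \<in> ?K"]
    using T(3) unfolding dependent_M_def by blast
  finally show ?thesis .
qed

section \<open>Matroid notions and contraction*-depth in CMSO\<close>

lemma sat_Dependent_upd:
  fixes Vs :: "('f::{field,finite} \<Rightarrow> nat) list"
  assumes "vars_below Vs n" "list_all2 (encodes_vec A \<tau>) Vs vs" "D \<subseteq> {..<dim_col A}"
  shows "sat A \<sigma> (\<tau>(n := Inr ` D)) (Dependent n Vs (Suc n)) \<longleftrightarrow>
    dependent_M A (span_list (dim_row A) vs) D"
proof (rule sat_Dependent)
  show "vars_below Vs (Suc n)"
    using vars_below_mono[OF assms(1)] by simp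
  show "list_all2 (encodes_vec A (\<tau>(n := Inr ` D))) Vs vs"
    using encodes_vecs_upd[OF assms(1)] assms(2) by simp
qed (use assms(3) in auto)

definition Subset :: "nat \<Rightarrow> nat \<Rightarrow> nat \<Rightarrow> 'f cmso" where
  "Subset X Y n = All1 n (Imp (Mem n X) (Mem n Y))"

lemma sat_Subset: "sat A \<sigma> \<tau> (Subset X Y n) \<longleftrightarrow> univ_S A \<inter> \<tau> X \<subseteq> \<tau> Y"
  unfolding Subset_def by auto

definition ProperSubsetsIndependent :: "nat \<Rightarrow> ('f::{field,finite} \<Rightarrow> nat) list \<Rightarrow> nat \<Rightarrow> 'f cmso" where
  "ProperSubsetsIndependent D Vs n =
     All2 n (Imp (Conj (Subset n D n) (Neg (Subset D n n))) (Neg (Dependent n Vs (Suc n))))"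

lemma sat_ProperSubsetsIndependent:
  fixes Vs :: "('f::{field,finite} \<Rightarrow> nat) list"
  assumes D: "D < n" "\<tau> D = Inr ` D'" "D' \<subseteq> {..<dim_col A}"
    and vs: "vars_below Vs n" "list_all2 (encodes_vec A \<tau>) Vs vs"
  shows "sat A \<sigma> \<tau> (ProperSubsetsIndependent D Vs n) \<longleftrightarrow>
    (\<forall>D''. D'' \<subset> D' \<longrightarrow> \<not> dependent_M A (span_list (dim_row A) vs) D'')"
proof -
  let ?K = "span_list (dim_row A) vs"
  have DU: "\<tau> D \<subseteq> univ_S A"
    using D(2,3) by (auto simp: univ_S_def)
  have "sat A \<sigma> \<tau> (ProperSubsetsIndependent D Vs n)
      \<longleftrightarrow> (\<forall>E. E \<subseteq> univ_S A \<longrightarrow> E \<subset> \<tau> D \<longrightarrow> \<not> sat A \<sigma> (\<tau>(n := E)) (Dependent n Vs (Suc n)))"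
    unfolding ProperSubsetsIndependent_def using D(1) DU by (auto simp: sat_Subset Int_absorb1)
  also have "\<dots> \<longleftrightarrow> (\<forall>D''. D'' \<subset> D' \<longrightarrow> \<not> dependent_M A ?K D'')"
  proof (intro iffI allI impI)
    fix D''
    assume "\<forall>E. E \<subseteq> univ_S A \<longrightarrow> E \<subset> \<tau> D \<longrightarrow> \<not> sat A \<sigma> (\<tau>(n := E)) (Dependent n Vs (Suc n))"
      and "D'' \<subset> D'"
    moreover have "Inr ` D'' \<subset> \<tau> D" "Inr ` D'' \<subseteq> univ_S A"
      using \<open>D'' \<subset> D'\<close> D(2) DU by (auto simp: inj_image_subset_iff)
    ultimately show "\<not> dependent_M A ?K D''"
      using sat_Dependent_upd[OF vs] D(3) by (metis psubset_imp_subset subset_trans)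
  next
    fix E
    assume "\<forall>D''. D'' \<subset> D' \<longrightarrow> \<not> dependent_M A ?K D''" "E \<subseteq> univ_S A" "E \<subset> \<tau> D"
    moreover have E: "E = Inr ` (Inr -` E)" "Inr -` E \<subset> D'"
      using \<open>E \<subset> \<tau> D\<close> D(2) by auto
    moreover have "sat A \<sigma> (\<tau>(n := E)) (Dependent n Vs (Suc n)) \<longleftrightarrow> dependent_M A ?K (Inr -` E)"
      using sat_Dependent_upd[OF vs, of "Inr -` E"] E D(3) by auto
    ultimately show "\<not> sat A \<sigma> (\<tau>(n := E)) (Dependent n Vs (Suc n))"
      by blast
  qed
  finally show ?thesis .
qed

definition Circuit :: "nat \<Rightarrow> nat \<Rightarrow> ('f::{field,finite} \<Rightarrow> nat) list \<Rightarrow> nat \<Rightarrow> 'f cmso" where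
  "Circuit D S Vs n =
     Conj (Subset D S n) (Conj (Dependent D Vs n) (ProperSubsetsIndependent D Vs n))"

lemma sat_Circuit:
  fixes Vs :: "('f::{field,finite} \<Rightarrow> nat) list"
  assumes "D < n" "S < n" "\<tau> S = Inr ` C" "C \<subseteq> {..<dim_col A}" "\<tau> D \<subseteq> univ_S A"
    and vs: "vars_below Vs n" "list_all2 (encodes_vec A \<tau>) Vs vs"
  shows "sat A \<sigma> \<tau> (Circuit D S Vs n) \<longleftrightarrow>
    (\<exists>D'. \<tau> D = Inr ` D' \<and> circuit_M A (span_list (dim_row A) vs) C D')"
proof (cases "\<tau> D \<subseteq> \<tau> S")
  case False
  then have "\<not> sat A \<sigma> \<tau> (Subset D S n)"
    using assms(5) by (simp add: sat_Subset Int_absorb1)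
  moreover have "\<not> circuit_M A (span_list (dim_row A) vs) C D'" if "\<tau> D = Inr ` D'" for D'
  proof
    assume "circuit_M A (span_list (dim_row A) vs) C D'"
    then have "D' \<subseteq> C"
      unfolding circuit_M_def by blast
    with that assms(3) False show False
      by (metis image_mono)
  qed
  ultimately show ?thesis
    unfolding Circuit_def by auto
next
  case True
  define D' where "D' = Inr -` \<tau> D"
  have D': "\<tau> D = Inr ` D'" "D' \<subseteq> C"
    using True assms(3) unfolding D'_def by auto
  have cols: "D' \<subseteq> {..<dim_col A}"
    using D'(2) assms(4) by blast
  show ?thesis
    unfolding Circuit_def circuit_M_def
    using True D' sat_Dependent[OF assms(1) D'(1) cols vs]
      sat_ProperSubsetsIndependent[OF assms(1) D'(1) cols vs]
    by (auto simp: sat_Subset inj_image_eq_iff)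
qed

definition CommonCircuit ::
  "nat \<Rightarrow> nat \<Rightarrow> nat \<Rightarrow> ('f::{field,finite} \<Rightarrow> nat) list \<Rightarrow> nat \<Rightarrow> 'f cmso" where
  "CommonCircuit x y S Vs n = Ex2 n (Conj (Circuit n S Vs (Suc n)) (Conj (Mem x n) (Mem y n)))"

lemma sat_CommonCircuit:
  fixes Vs :: "('f::{field,finite} \<Rightarrow> nat) list"
  assumes "S < n" "\<tau> S = Inr ` C" "C \<subseteq> {..<dim_col A}"
    and vs: "vars_below Vs n" "list_all2 (encodes_vec A \<tau>) Vs vs"
  shows "sat A \<sigma> \<tau> (CommonCircuit x y S Vs n) \<longleftrightarrow>
    (\<exists>D. circuit_M A (span_list (dim_row A) vs) C D \<and> \<sigma> x \<in> Inr ` D \<and> \<sigma> y \<in> Inr ` D)"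
proof -
  let ?K = "span_list (dim_row A) vs"
  have "sat A \<sigma> (\<tau>(n := E)) (Circuit n S Vs (Suc n)) \<longleftrightarrow>
      (\<exists>D. (\<tau>(n := E)) n = Inr ` D \<and> circuit_M A ?K C D)"
    if "E \<subseteq> univ_S A" for E
    using assms(1-3) that vars_below_mono[OF vs(1)] encodes_vecs_upd[OF vs(1)] vs(2)
    by (intro sat_Circuit) auto
  moreover have "Inr ` D \<subseteq> univ_S A" if "circuit_M A ?K C D" for D
    using that assms(3) unfolding circuit_M_def univ_S_def by blast
  ultimately have "(\<exists>E. E \<subseteq> univ_S A \<and> sat A \<sigma> (\<tau>(n := E)) (Circuit n S Vs (Suc n)) \<and>
      \<sigma> x \<in> E \<and> \<sigma> y \<in> E)
      \<longleftrightarrow> (\<exists>D. circuit_M A ?K C D \<and> \<sigma> x \<in> Inr ` D \<and> \<sigma> y \<in> Inr ` D)"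
    by (metis (no_types, lifting) fun_upd_same)
  then show ?thesis
    unfolding CommonCircuit_def by simp
qed

definition Connected :: "nat \<Rightarrow> ('f::{field,finite} \<Rightarrow> nat) list \<Rightarrow> nat \<Rightarrow> 'f cmso" where
  "Connected S Vs n = All1 n (All1 (Suc n)
     (Imp (Conj (Mem n S) (Conj (Mem (Suc n) S) (Neg (Eq n (Suc n)))))
       (CommonCircuit n (Suc n) S Vs n)))"

lemma sat_Connected:
  fixes Vs :: "('f::{field,finite} \<Rightarrow> nat) list"
  assumes "S < n" "\<tau> S = Inr ` C" "C \<subseteq> {..<dim_col A}"
    and vs: "vars_below Vs n" "list_all2 (encodes_vec A \<tau>) Vs vs"
  shows "sat A \<sigma> \<tau> (Connected S Vs n) \<longleftrightarrow> connected_M A (span_list (dim_row A) vs) C"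
proof -
  let ?K = "span_list (dim_row A) vs"
  have CU: "Inr ` C \<subseteq> univ_S A"
    using assms(3) by (auto simp: univ_S_def)
  have "sat A \<sigma> \<tau> (Connected S Vs n) \<longleftrightarrow> (\<forall>e1\<in>univ_S A. e1 \<in> Inr ` C \<longrightarrow>
      (\<forall>e2\<in>univ_S A. e2 \<in> Inr ` C \<longrightarrow> e1 \<noteq> e2 \<longrightarrow>
        (\<exists>D. circuit_M A ?K C D \<and> e1 \<in> Inr ` D \<and> e2 \<in> Inr ` D)))"
    unfolding Connected_def using assms(1,2) by (auto simp: sat_CommonCircuit[OF assms])
  also have "\<dots> \<longleftrightarrow> connected_M A ?K C"
    unfolding connected_M_def by (simp only: ball_Inr_image[OF CU]) simp
  finally show ?thesis .
qed

definition Component :: "nat \<Rightarrow> nat \<Rightarrow> ('f::{field,finite} \<Rightarrow> nat) list \<Rightarrow> nat \<Rightarrow> 'f cmso" where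
  "Component X S Vs n = Ex1 n (Conj (Mem n S) (All1 (Suc n) (Iff (Mem (Suc n) X)
     (Conj (Mem (Suc n) S) (Or (Eq n (Suc n)) (CommonCircuit n (Suc n) S Vs n))))))"

lemma sat_Component:
  fixes Vs :: "('f::{field,finite} \<Rightarrow> nat) list"
  assumes "X < n" "S < n" "\<tau> S = Inr ` C" "C \<subseteq> {..<dim_col A}" "\<tau> X \<subseteq> univ_S A"
    and vs: "vars_below Vs n" "list_all2 (encodes_vec A \<tau>) Vs vs"
  shows "sat A \<sigma> \<tau> (Component X S Vs n) \<longleftrightarrow>
    (\<exists>D\<in>components_M A (span_list (dim_row A) vs) C. \<tau> X = Inr ` D)"
proof -
  let ?K = "span_list (dim_row A) vs"
  have CU: "Inr ` C \<subseteq> univ_S A"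
    using assms(4) by (auto simp: univ_S_def)
  have "sat A \<sigma> \<tau> (Component X S Vs n) \<longleftrightarrow> (\<exists>e0\<in>univ_S A. e0 \<in> Inr ` C \<and> (\<forall>e\<in>univ_S A. e \<in> \<tau> X
      \<longleftrightarrow> e \<in> Inr ` C \<and> (e0 = e \<or> (\<exists>D. circuit_M A ?K C D \<and> e0 \<in> Inr ` D \<and> e \<in> Inr ` D))))"
    unfolding Component_def using assms(1-3) by (auto simp: sat_CommonCircuit[OF assms(2-4) vs])
  also have "\<dots> \<longleftrightarrow> (\<exists>x\<in>C. \<forall>e\<in>univ_S A. e \<in> \<tau> X \<longleftrightarrow> e \<in> Inr ` {y\<in>C. linked_M A ?K C x y})"
    unfolding bex_Inr_image[OF CU] linked_M_def by (intro bex_cong ball_cong refl) auto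
  also have "\<dots> \<longleftrightarrow> (\<exists>x\<in>C. \<tau> X = Inr ` {y\<in>C. linked_M A ?K C x y})"
    using assms(5) CU by blast
  also have "\<dots> \<longleftrightarrow> (\<exists>D\<in>components_M A ?K C. \<tau> X = Inr ` D)"
    unfolding components_M_linked by blast
  finally show ?thesis .
qed

definition AllLoops :: "nat \<Rightarrow> ('f::{field,finite} \<Rightarrow> nat) list \<Rightarrow> nat \<Rightarrow> 'f cmso" where
  "AllLoops S Vs n =
     All1 n (Imp (Mem n S) (LetSet n (Suc n) (Eq (Suc n) n) (Dependent n Vs (Suc n))))"

lemma sat_AllLoops:
  fixes Vs :: "('f::{field,finite} \<Rightarrow> nat) list"
  assumes "S < n" "\<tau> S = Inr ` C" "C \<subseteq> {..<dim_col A}"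
    and vs: "vars_below Vs n" "list_all2 (encodes_vec A \<tau>) Vs vs"
  shows "sat A \<sigma> \<tau> (AllLoops S Vs n) \<longleftrightarrow> all_loops A (span_list (dim_row A) vs) C"
proof -
  have "sat A (\<sigma>(n := Inr c)) \<tau> (LetSet n (Suc n) (Eq (Suc n) n) (Dependent n Vs (Suc n)))
      \<longleftrightarrow> dependent_M A (span_list (dim_row A) vs) {c}" if "c \<in> C" for c
  proof -
    have "Inr c \<in> univ_S A" "{c} \<subseteq> {..<dim_col A}"
      using that assms(3) by (auto simp: univ_S_def)
    then have "univ_S A \<inter> {Inr c} = Inr ` {c}"
      by auto
    then show ?thesis
      using sat_Dependent_upd[OF vs \<open>{c} \<subseteq> {..<dim_col A}\<close>]
      by (subst sat_LetSet[where P="{Inr c}"]) auto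
  qed
  moreover have CU: "Inr ` C \<subseteq> univ_S A"
    using assms(3) by (auto simp: univ_S_def)
  ultimately show ?thesis
    unfolding AllLoops_def all_loops_def sat_All1 sat_Imp sat.simps(5) fun_upd_same assms(2)
      ball_Inr_image[OF CU]
    by simp
qed

text \<open>One step of the recursive definition of \<open>csd_le\<close>; \<open>step X b\<close> expresses \<open>csd_step\<close> for
  the columns in \<open>X\<close>, using variables from \<open>b\<close> on.\<close>

definition CsdBody ::
  "(nat \<Rightarrow> nat \<Rightarrow> 'f cmso) \<Rightarrow> nat \<Rightarrow> ('f::{field,finite} \<Rightarrow> nat) list \<Rightarrow> nat \<Rightarrow> 'f cmso" where
  "CsdBody step S Vs n = Or (AllLoops S Vs n)
     (Or (Conj (Neg (Connected S Vs n))
           (All2 n (Imp (Component n S Vs (Suc n)) (Or (AllLoops n Vs (Suc n)) (step n (Suc n))))))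
       (Conj (Connected S Vs n) (step S n)))"

lemma sat_CsdBody:
  fixes Vs :: "('f::{field,finite} \<Rightarrow> nat) list"
  assumes "S < n" "\<tau> S = Inr ` C" "C \<subseteq> {..<dim_col A}"
    and vs: "vars_below Vs n" "list_all2 (encodes_vec A \<tau>) Vs vs"
    and step: "\<And>X b \<sigma>' \<tau>' D. X < b \<Longrightarrow> vars_below Vs b \<Longrightarrow> \<tau>' X = Inr ` D \<Longrightarrow> D \<subseteq> {..<dim_col A} \<Longrightarrow>
      list_all2 (encodes_vec A \<tau>') Vs vs \<Longrightarrow>
      sat A \<sigma>' \<tau>' (step X b) \<longleftrightarrow> csd_step A (span_list (dim_row A) vs) D d"
  shows "sat A \<sigma> \<tau> (CsdBody step S Vs n) \<longleftrightarrow> csd_le A (span_list (dim_row A) vs) C d"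
proof -
  let ?K = "span_list (dim_row A) vs"
  have comp_cols: "D \<subseteq> {..<dim_col A}" if "D \<in> components_M A ?K C" for D
    using components_M_subset[OF that] assms(3) by blast
  have comp_univ: "Inr ` D \<subseteq> univ_S A" if "D \<in> components_M A ?K C" for D
    using comp_cols[OF that] by (auto simp: univ_S_def)
  have vs': "vars_below Vs (Suc n)" "list_all2 (encodes_vec A (\<tau>(n := E))) Vs vs" for E
    using vars_below_mono[OF vs(1)] encodes_vecs_upd[OF vs(1)] vs(2) by auto
  have comp: "sat A \<sigma> (\<tau>(n := E)) (Component n S Vs (Suc n)) \<longleftrightarrow>
      (\<exists>D\<in>components_M A ?K C. E = Inr ` D)"
    if "E \<subseteq> univ_S A" for E
    using sat_Component[of n "Suc n" S "\<tau>(n := E)" C A Vs vs \<sigma>] assms(1-3) that vs' by simp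
  have comp_csd: "sat A \<sigma> (\<tau>(n := Inr ` D)) (Or (AllLoops n Vs (Suc n)) (step n (Suc n))) \<longleftrightarrow>
      csd_le A ?K D d" if "D \<in> components_M A ?K C" for D
    using sat_AllLoops[OF _ _ comp_cols[OF that] vs'] step[OF _ vs'(1) _ comp_cols[OF that] vs'(2)]
      csd_le_connected_iff[OF comp_cols[OF that]
        connected_components_M[OF is_subspace_span_list assms(3) that]]
    by simp
  have "sat A \<sigma> \<tau>
      (All2 n (Imp (Component n S Vs (Suc n)) (Or (AllLoops n Vs (Suc n)) (step n (Suc n)))))
      \<longleftrightarrow> (\<forall>E. E \<subseteq> univ_S A \<longrightarrow> (\<exists>D\<in>components_M A ?K C. E = Inr ` D) \<longrightarrow>
        sat A \<sigma> (\<tau>(n := E)) (Or (AllLoops n Vs (Suc n)) (step n (Suc n))))"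
    using comp by (simp del: sat_Or)
  also have "\<dots> \<longleftrightarrow> (\<forall>D\<in>components_M A ?K C.
      sat A \<sigma> (\<tau>(n := Inr ` D)) (Or (AllLoops n Vs (Suc n)) (step n (Suc n))))"
    using comp_univ by blast
  also have "\<dots> \<longleftrightarrow> (\<forall>D\<in>components_M A ?K C. csd_le A ?K D d)"
    using comp_csd by simp
  finally have "sat A \<sigma> \<tau>
      (All2 n (Imp (Component n S Vs (Suc n)) (Or (AllLoops n Vs (Suc n)) (step n (Suc n)))))
      \<longleftrightarrow> (\<forall>D\<in>components_M A ?K C. csd_le A ?K D d)" .
  then show ?thesis
    unfolding CsdBody_def csd_le_iff[OF assms(3)]
    using sat_AllLoops[OF assms(1-5)] sat_Connected[OF assms(1-5)]
      step[OF assms(1) vs(1) assms(2,3) vs(2)]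
    by simp
qed

fun CsdLe :: "nat \<Rightarrow> nat \<Rightarrow> ('f::{field,finite} \<Rightarrow> nat) list \<Rightarrow> nat \<Rightarrow> 'f cmso" where
  "CsdLe 0 S Vs n = CsdBody (\<lambda>_ _. FF) S Vs n"
| "CsdLe (Suc d) S Vs n =
     CsdBody (\<lambda>X b. ExFun b (RowP b) (CsdLe d X (Vs @ [value_var b]) (b + card (UNIV :: 'f set))))
       S Vs n"

lemma sat_CsdLe:
  fixes Vs :: "('f::{field,finite} \<Rightarrow> nat) list"
  assumes "S < n" "\<tau> S = Inr ` C" "C \<subseteq> {..<dim_col A}"
    and "vars_below Vs n" "list_all2 (encodes_vec A \<tau>) Vs vs"
  shows "sat A \<sigma> \<tau> (CsdLe d S Vs n) \<longleftrightarrow> csd_le A (span_list (dim_row A) vs) C d"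
  using assms
proof (induction d arbitrary: S Vs vs n C \<sigma> \<tau>)
  case 0
  show ?case
    unfolding CsdLe.simps by (rule sat_CsdBody[OF 0]) (simp add: csd_step_def)
next
  case (Suc d)
  show ?case
    unfolding CsdLe.simps
  proof (rule sat_CsdBody[OF Suc.prems])
    fix X b \<sigma>' \<tau>' D
    assume X: "X < b" "\<tau>' X = Inr ` D" "D \<subseteq> {..<dim_col A}"
      and vs: "vars_below Vs b" "list_all2 (encodes_vec A \<tau>') Vs vs"
    let ?b' = "b + card (UNIV :: 'f set)"
    let ?K = "span_list (dim_row A) vs"
    have "sat A \<sigma>' \<tau>' (ExFun b (RowP b) (CsdLe d X (Vs @ [value_var b]) ?b')) \<longleftrightarrow>
        (\<exists>v\<in>carrier_vec (dim_row A). csd_le A (span_list (dim_row A) (vs @ [v])) D d)"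
    proof (rule sat_ExFun_RowP)
      fix F :: "'f \<Rightarrow> (nat + nat) set" and v
      assume "encodes_vec A (assign_values b F \<tau>') (value_var b) v"
      then have "list_all2 (encodes_vec A (assign_values b F \<tau>')) (Vs @ [value_var b]) (vs @ [v])"
        using encodes_vecs_cong[OF vs(1), of "assign_values b F \<tau>'" \<tau>'] vs(2)
        by (simp add: list_all2_appendI)
      moreover have "vars_below (Vs @ [value_var b]) ?b'"
        using vars_below_mono[OF vs(1)] by (auto simp: vars_below_def)
      ultimately show "sat A \<sigma>' (assign_values b F \<tau>') (CsdLe d X (Vs @ [value_var b]) ?b') \<longleftrightarrow>
          csd_le A (span_list (dim_row A) (vs @ [v])) D d"
        using X by (intro Suc.IH) auto
    qed
    also have "\<dots> \<longleftrightarrow> csd_step A ?K D (Suc d)"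
      unfolding csd_step_def by (auto simp: add_span_span_list)
    finally show "sat A \<sigma>' \<tau>' (ExFun b (RowP b) (CsdLe d X (Vs @ [value_var b]) ?b'))
        \<longleftrightarrow> csd_step A ?K D (Suc d)" .
  qed
qed

definition CsdSentence :: "nat \<Rightarrow> 'f::{field,finite} cmso" where
  "CsdSentence d = close (LetSet 0 0 (ColP 0) (CsdLe d 0 [] 1))"

lemma models_CsdSentence: "models A (CsdSentence d) \<longleftrightarrow> csd_matroid A \<le> d"
proof -
  let ?K = "{0\<^sub>v (dim_row A)}"
  have "sat A \<sigma> \<tau> (LetSet 0 0 (ColP 0) (CsdLe d 0 [] 1)) \<longleftrightarrow> csd_le A ?K {..<dim_col A} d" for \<sigma> \<tau>
  proof -
    have "univ_S A \<inter> Inr ` {..<dim_col A} = Inr ` {..<dim_col A}"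
      by (auto simp: univ_S_def)
    then show ?thesis
      using sat_CsdLe[of 0 1 "\<tau>(0 := Inr ` {..<dim_col A})" "{..<dim_col A}" A "[]" "[]" \<sigma> d]
      by (subst sat_LetSet[where P="Inr ` {..<dim_col A}"])
        (auto simp: vars_below_def span_list_Nil)
  qed
  moreover have "csd_le A ?K {..<dim_col A} d" if "univ_S A = {}"
    using that by (intro csd_le.rank0) (simp add: rank_M_eq_0_iff all_loops_def univ_S_def)
  ultimately show ?thesis
    unfolding CsdSentence_def csd_matroid_le_iff by (rule models_close)
qed

theorem theorem10:
  fixes d :: nat
  shows "\<exists>\<phi> :: ('f::{field,finite}) cmso. sentence \<phi> \<and>
           (\<forall>A :: 'f mat. models A \<phi> \<longleftrightarrow> csd_matroid A \<le> d)"
proof -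
  have "sentence (CsdSentence d :: 'f cmso)"
    unfolding CsdSentence_def by (rule sentence_close)
  with models_CsdSentence show ?thesis
    by blast
qed

end
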